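(* Let $n\ge2$, let $V$ be a finite-dimensional complex vector space and let $\rho\colon P_{n+1}\to\mathrm{GL}(V)$ be a representation, where $P_{n+1}$ is identified with $F_n\rtimes P_n$ as described in the context. Fix $t_1,\dots,t_n\in\mathbf{C}^*$. Then (i) there is a representation $\rho_{t_1,\dots,t_n}\colon P_{n+1}\to\mathrm{GL}(V)$ with $\rho_{t_1,\dots,t_n}(g_i)=t_i\rho(g_i)$ for $i=1,\dots,n$ and $\rho_{t_1,\dots,t_n}(\beta)=\rho(\beta)$ for all $\beta\in P_n$; and (ii) for every $\beta\in P_n$ all entries of $\phi(\beta)$ lie in $\mathbf{Z}[F_n\rtimes P_n]$, and the map $\rho^+_{t_1,\dots,t_n}\colon P_n\to\mathrm{GL}(V^{\oplus n})$ sending $\beta$ to the block matrix whose $(k,l)$ block is $\rho_{t_1,\dots,t_n}(\phi(\beta)_{kl})$ (with $\rho_{t_1,\dots,t_n}$ extended linearly to the group ring) is a representation of $P_n$. This gives an $n$-parameter family of representations of $P_n$ on $V^{\oplus n}$.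
   Context: The braid group $B_n$ has generators $\sigma_1,\dots,\sigma_{n-1}$ with relations $\sigma_i\sigma_j=\sigma_j\sigma_i$ for $|i-j|>1$ and $\sigma_i\sigma_j\sigma_i=\sigma_j\sigma_i\sigma_j$ for $|i-j|=1$; $P_n\subset B_n$ is the pure braid group. Let $F_n$ be the free group on $g_1,\dots,g_n$. The semidirect product $F_n\rtimes B_n$ is the group generated by $F_n$ and $B_n$ subject to the additional relations $g_{i+1}\sigma_i=\sigma_i g_i$, $g_i\sigma_i=\sigma_i g_i g_{i+1}g_i^{-1}$, and $g_j\sigma_i=\sigma_i g_j$ for $j\notin\{i,i+1\}$; $F_n\rtimes P_n$ denotes its subgroup generated by $F_n$ and $P_n$. For $i=1,\dots,n-1$ let $R_i=\begin{bmatrix}0&g_i\\1&1-g_i\end{bmatrix}$, and let $\phi$ be the homomorphism from $B_n$ to the invertible $n\times n$ matrices over the group ring $\mathbf{Z}[F_n\rtimes B_n]$ given by $\phi(\sigma_i)=\sigma_i\cdot\mathrm{diag}(I_{i-1},R_i,I_{n-i-1})$ (the scalar $\sigma_i$ multiplies each entry on the left). The pure braid group $P_{n+1}$ is identified with $F_n\rtimes P_n$: $P_n\subset P_{n+1}$ as pure braids on the first $n$ strands, and $F_n$ corresponds to the subgroup of $P_{n+1}$ of braids whose first $n$ strands are straight, freely generated by $g_i=(\sigma_n\cdots\sigma_{i+1})\sigma_i^2(\sigma_n\cdots\sigma_{i+1})^{-1}$, $i=1,\dots,n$. *)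

theory Defs
  imports "Jordan_Normal_Form.Matrix" "HOL-Algebra.Generated_Groups"
begin

text \<open>Generators: BG i is g_i (1 \<le> i \<le> n), BS i is sigma_i (1 \<le> i \<le> n-1).
  A letter is a generator with a sign (True = the generator, False = its inverse).\<close>

datatype gen = BG nat | BS nat

type_synonym letter = "gen \<times> bool"
type_synonym word = "letter list"

definition alphabet :: "nat \<Rightarrow> gen set" where
  "alphabet n = {BG i | i. 1 \<le> i \<and> i \<le> n} \<union> {BS i | i. 1 \<le> i \<and> i < n}"

abbreviation P :: "gen \<Rightarrow> letter" where "P x \<equiv> (x, True)"
abbreviation N :: "gen \<Rightarrow> letter" where "N x \<equiv> (x, False)"

definition rels :: "nat \<Rightarrow> (word \<times> word) set" where
  "rels n =
     {([(a, b), (a, \<not> b)], []) | a b. a \<in> alphabet n}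
   \<union> {([P (BS i), P (BS j)], [P (BS j), P (BS i)]) | i j.
        1 \<le> i \<and> i < n \<and> 1 \<le> j \<and> j < n \<and> (i + 1 < j \<or> j + 1 < i)}
   \<union> {([P (BS i), P (BS j), P (BS i)], [P (BS j), P (BS i), P (BS j)]) | i j.
        1 \<le> i \<and> i < n \<and> 1 \<le> j \<and> j < n \<and> (i + 1 = j \<or> j + 1 = i)}
   \<union> {([P (BG (i+1)), P (BS i)], [P (BS i), P (BG i)]) | i. 1 \<le> i \<and> i < n}
   \<union> {([P (BG i), P (BS i)], [P (BS i), P (BG i), P (BG (i+1)), N (BG i)]) | i. 1 \<le> i \<and> i < n}
   \<union> {([P (BG j), P (BS i)], [P (BS i), P (BG j)]) | i j.
        1 \<le> i \<and> i < n \<and> 1 \<le> j \<and> j \<le> n \<and> j \<noteq> i \<and> j \<noteq> i + 1}"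

inductive eqv :: "nat \<Rightarrow> word \<Rightarrow> word \<Rightarrow> bool" for n where
  eqv_refl: "eqv n w w"
| eqv_sym: "eqv n u w \<Longrightarrow> eqv n w u"
| eqv_trans: "eqv n u v \<Longrightarrow> eqv n v w \<Longrightarrow> eqv n u w"
| eqv_rel: "(l, r) \<in> rels n \<Longrightarrow> eqv n (u @ l @ v) (u @ r @ v)"

definition words :: "nat \<Rightarrow> word set" where
  "words n = {w. \<forall>x \<in> set w. fst x \<in> alphabet n}"

definition cls :: "nat \<Rightarrow> word \<Rightarrow> word set" where
  "cls n w = {w'. eqv n w' w}"

definition FB :: "nat \<Rightarrow> word set monoid" where
  "FB n = \<lparr> carrier = cls n ` words n,
            mult = (\<lambda>A B. cls n ((SOME a. a \<in> A) @ (SOME b. b \<in> B))),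
            one = cls n [] \<rparr>"

definition gen_g :: "nat \<Rightarrow> nat \<Rightarrow> word set" where
  "gen_g n i = cls n [P (BG i)]"

fun is_BS :: "gen \<Rightarrow> bool" where
  "is_BS (BS _) = True" | "is_BS (BG _) = False"

fun is_BG :: "gen \<Rightarrow> bool" where
  "is_BG (BG _) = True" | "is_BG (BS _) = False"

definition swp :: "nat \<Rightarrow> nat \<Rightarrow> nat" where
  "swp i k = (if k = i then i + 1 else if k = i + 1 then i else k)"

fun perm_word :: "word \<Rightarrow> nat \<Rightarrow> nat" where
  "perm_word [] = id"
| "perm_word ((BS i, _) # w) = swp i \<circ> perm_word w"
| "perm_word ((BG _, _) # w) = perm_word w"

definition Fn :: "nat \<Rightarrow> word set set" where
  "Fn n = cls n ` {w \<in> words n. \<forall>x \<in> set w. is_BG (fst x)}"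

definition Bn :: "nat \<Rightarrow> word set set" where
  "Bn n = cls n ` {w \<in> words n. \<forall>x \<in> set w. is_BS (fst x)}"

definition Pn :: "nat \<Rightarrow> word set set" where
  "Pn n = cls n ` {w \<in> words n. (\<forall>x \<in> set w. is_BS (fst x)) \<and> perm_word w = id}"

definition FP :: "nat \<Rightarrow> word set set" where
  "FP n = generate (FB n) (Fn n \<union> Pn n)"

definition FPgroup :: "nat \<Rightarrow> word set monoid" where
  "FPgroup n = (FB n)\<lparr>carrier := FP n\<rparr>"

definition Pgroup :: "nat \<Rightarrow> word set monoid" where
  "Pgroup n = (FB n)\<lparr>carrier := Pn n\<rparr>"

definition GL :: "nat \<Rightarrow> complex mat monoid" where
  "GL d = \<lparr> carrier = {A. A \<in> carrier_mat d d \<and> invertible_mat A},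
            mult = (*), one = 1\<^sub>m d \<rparr>"

text \<open>Group ring elements: finitely supported functions from group elements to integers.\<close>
type_synonym gring = "word set \<Rightarrow> int"

definition supp :: "gring \<Rightarrow> word set set" where
  "supp a = {x. a x \<noteq> 0}"

definition delta :: "word set \<Rightarrow> gring" where
  "delta x = (\<lambda>y. if y = x then 1 else 0)"

definition gr_mult :: "nat \<Rightarrow> gring \<Rightarrow> gring \<Rightarrow> gring" where
  "gr_mult n a b = (\<lambda>x. \<Sum>y \<in> supp a. \<Sum>z \<in> supp b.
      if y \<otimes>\<^bsub>FB n\<^esub> z = x then a y * b z else 0)"

definition in_ZFP :: "nat \<Rightarrow> gring \<Rightarrow> bool" where
  "in_ZFP n a \<longleftrightarrow> finite (supp a) \<and> supp a \<subseteq> FP n"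

text \<open>n x n matrices over the group ring, indices 1..n.\<close>
type_synonym gmat = "nat \<Rightarrow> nat \<Rightarrow> gring"

definition gmat_mult :: "nat \<Rightarrow> gmat \<Rightarrow> gmat \<Rightarrow> gmat" where
  "gmat_mult n A B = (\<lambda>k l x. \<Sum>m \<in> {1..n}. gr_mult n (A k m) (B m l) x)"

definition gmat_one :: "nat \<Rightarrow> gmat" where
  "gmat_one n = (\<lambda>k l. if k = l then delta (one (FB n)) else (\<lambda>_. 0))"

text \<open>diag(I_{i-1}, R_i, I_{n-i-1}) with R_i = [[0, g_i], [1, 1 - g_i]].\<close>
definition Dmat :: "nat \<Rightarrow> nat \<Rightarrow> gmat" where
  "Dmat n i = (\<lambda>k l.
     if k = i \<and> l = i then (\<lambda>_. 0)
     else if k = i \<and> l = i + 1 then delta (gen_g n i)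
     else if k = i + 1 \<and> l = i then delta (one (FB n))
     else if k = i + 1 \<and> l = i + 1 then (\<lambda>x. delta (one (FB n)) x - delta (gen_g n i) x)
     else if k = l then delta (one (FB n)) else (\<lambda>_. 0))"

text \<open>Its inverse diag(I_{i-1}, R_i^{-1}, I_{n-i-1}) with
  R_i^{-1} = [[1 - g_i^{-1}, 1], [g_i^{-1}, 0]].\<close>
definition Dinv :: "nat \<Rightarrow> nat \<Rightarrow> gmat" where
  "Dinv n i = (\<lambda>k l.
     if k = i \<and> l = i then (\<lambda>x. delta (one (FB n)) x - delta (cls n [N (BG i)]) x)
     else if k = i \<and> l = i + 1 then delta (one (FB n))
     else if k = i + 1 \<and> l = i then delta (cls n [N (BG i)])
     else if k = i + 1 \<and> l = i + 1 then (\<lambda>_. 0)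
     else if k = l then delta (one (FB n)) else (\<lambda>_. 0))"

text \<open>phi(sigma_i) = sigma_i . D_i (scalar on the left); phi(sigma_i^{-1}) = phi(sigma_i)^{-1}
  = D_i^{-1} . sigma_i^{-1}.\<close>
fun phi_letter :: "nat \<Rightarrow> letter \<Rightarrow> gmat" where
  "phi_letter n (BS i, True) = (\<lambda>k l. gr_mult n (delta (cls n [P (BS i)])) (Dmat n i k l))"
| "phi_letter n (BS i, False) = (\<lambda>k l. gr_mult n (Dinv n i k l) (delta (cls n [N (BS i)])))"
| "phi_letter n (BG i, b) = gmat_one n"

fun phi_word :: "nat \<Rightarrow> word \<Rightarrow> gmat" where
  "phi_word n [] = gmat_one n"
| "phi_word n (x # w) = gmat_mult n (phi_letter n x) (phi_word n w)"

definition phi :: "nat \<Rightarrow> word set \<Rightarrow> gmat" where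
  "phi n \<beta> = phi_word n (SOME w. w \<in> \<beta> \<and> w \<in> words n \<and> (\<forall>x \<in> set w. is_BS (fst x)))"

definition rho_lin :: "nat \<Rightarrow> (word set \<Rightarrow> complex mat) \<Rightarrow> gring \<Rightarrow> complex mat" where
  "rho_lin d r a = mat d d (\<lambda>(p, q). \<Sum>x \<in> supp a. of_int (a x) * (r x $$ (p, q)))"

text \<open>rho^+(beta): block matrix on V^{n} whose (k,l) block is r(phi(beta)_{kl}).\<close>
definition rho_plus :: "nat \<Rightarrow> nat \<Rightarrow> (word set \<Rightarrow> complex mat) \<Rightarrow> word set \<Rightarrow> complex mat" where
  "rho_plus n d r \<beta> = mat (n * d) (n * d)
     (\<lambda>(a, b). rho_lin d r (phi n \<beta> (a div d + 1) (b div d + 1)) $$ (a mod d, b mod d))"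

definition twisted :: "nat \<Rightarrow> nat \<Rightarrow> (word set \<Rightarrow> complex mat) \<Rightarrow> (nat \<Rightarrow> complex)
    \<Rightarrow> (word set \<Rightarrow> complex mat) \<Rightarrow> bool" where
  "twisted n d \<rho> t \<rho>t \<longleftrightarrow> \<rho>t \<in> hom (FPgroup n) (GL d)
     \<and> (\<forall>i \<in> {1..n}. \<rho>t (gen_g n i) = t i \<cdot>\<^sub>m \<rho> (gen_g n i))
     \<and> (\<forall>\<beta> \<in> Pn n. \<rho>t \<beta> = \<rho> \<beta>)"

end

theory Submission
  imports Defs
begin

text \<open>
  (i) Sending \<open>g\<^sub>j\<close> to \<open>t\<^sub>j\<close> while letting \<open>\<sigma>\<^sub>i\<close> permute the indices of the parameters
  is a crossed homomorphism on \<open>F\<^sub>n \<rtimes> B\<^sub>n\<close>; on the kernel \<open>F\<^sub>n \<rtimes> P\<^sub>n\<close> of the underlying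
  permutation it is a character that is trivial on \<open>P\<^sub>n\<close>, and \<open>\<rho>\<^sub>t\<close> is \<open>\<rho>\<close> scaled by it.

  (ii) Every entry of \<open>\<phi>(\<sigma>\<^sub>i\<^sup>\<plusminus>\<^sup>1)\<close> is an integer combination of elements whose
  underlying permutation is that of \<open>\<sigma>\<^sub>i\<close>, hence the entries of \<open>\<phi>(\<beta>)\<close> combine elements
  with the permutation of \<open>\<beta>\<close>. Since every element of \<open>F\<^sub>n \<rtimes> B\<^sub>n\<close> is a braid word followed
  by a free word, \<open>F\<^sub>n \<rtimes> P\<^sub>n\<close> consists exactly of the elements with trivial permutation.

  (iii) On words, \<open>\<phi>\<close> is computed with formal sums of words. It respects the defining
  relations of \<open>B\<^sub>n\<close>, because each relation only involves a block of size at most 4, where it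
  is checked by normalising words. Applying \<open>\<rho>\<^sub>t\<close> entrywise is multiplicative on combinations of
  elements of \<open>F\<^sub>n \<rtimes> P\<^sub>n\<close>, so \<open>\<rho>\<^sup>+\<close> is multiplicative, and its values are invertible
  because inverses of pure braids are pure.
\<close>

section \<open>The presentation of \<open>F\<^sub>n \<rtimes> B\<^sub>n\<close>\<close>

declare eqv_trans[trans]

lemma eqv_append:
  assumes "eqv n u u'" and "eqv n v v'"
  shows "eqv n (u @ v) (u' @ v')"
proof -
  have right: "eqv n (u @ v) (u' @ v)" if "eqv n u u'" for u u'
    using that
  proof (induction rule: eqv.induct)
    case (eqv_rel l r a b)
    then show ?case using eqv.eqv_rel[of l r n a "b @ v"] by simp
  qed (auto intro: eqv.intros)
  have left: "eqv n (u' @ v) (u' @ v')" if "eqv n v v'" for v v'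
    using that
  proof (induction rule: eqv.induct)
    case (eqv_rel l r a b)
    then show ?case using eqv.eqv_rel[of l r n "u' @ a" b] by simp
  qed (auto intro: eqv.intros)
  show ?thesis using right[OF assms(1)] left[OF assms(2)] by (rule eqv_trans)
qed

lemma eqv_in_context: "eqv n l r \<Longrightarrow> U = a @ l @ b \<Longrightarrow> W = a @ r @ b \<Longrightarrow> eqv n U W"
  by (simp add: eqv_append eqv_refl)

lemma eqv_of_rel: "(l, r) \<in> rels n \<Longrightarrow> eqv n l r"
  using eqv_rel[of l r n "[]" "[]"] by simp

lemma cls_eq_iff: "cls n u = cls n w \<longleftrightarrow> eqv n u w"
proof
  assume "cls n u = cls n w"
  then have "u \<in> cls n w" unfolding cls_def using eqv_refl[of n u] by blast
  then show "eqv n u w" unfolding cls_def by simp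
next
  assume "eqv n u w"
  then show "cls n u = cls n w" unfolding cls_def by (auto intro: eqv_trans eqv_sym)
qed

lemma cls_self: "w \<in> cls n w"
  unfolding cls_def by (simp add: eqv_refl)

lemma mult_FB_cls: "cls n u \<otimes>\<^bsub>FB n\<^esub> cls n v = cls n (u @ v)"
proof -
  have "eqv n (SOME a. a \<in> cls n w) w" for w
    using someI[of "\<lambda>a. a \<in> cls n w", OF cls_self] unfolding cls_def by simp
  then show ?thesis unfolding FB_def by (simp add: cls_eq_iff eqv_append)
qed

lemma one_FB: "\<one>\<^bsub>FB n\<^esub> = cls n []"
  unfolding FB_def by simp

lemma carrier_FB: "carrier (FB n) = cls n ` words n"
  unfolding FB_def by simp

lemma words_append [simp]: "u @ v \<in> words n \<longleftrightarrow> u \<in> words n \<and> v \<in> words n"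
  and words_Cons [simp]: "x # v \<in> words n \<longleftrightarrow> fst x \<in> alphabet n \<and> v \<in> words n"
  and words_Nil [simp]: "[] \<in> words n"
  unfolding words_def by auto

lemma alphabet_iff:
  "BG j \<in> alphabet n \<longleftrightarrow> 1 \<le> j \<and> j \<le> n"
  "BS j \<in> alphabet n \<longleftrightarrow> 1 \<le> j \<and> j < n"
  by (auto simp: alphabet_def)

definition word_inv :: "word \<Rightarrow> word" where
  "word_inv w = rev (map (\<lambda>(a, b). (a, \<not> b)) w)"

lemma word_inv_simps [simp]:
  "word_inv [] = []"
  "word_inv (x # w) = word_inv w @ [(fst x, \<not> snd x)]"
  "word_inv (u @ v) = word_inv v @ word_inv u"
  unfolding word_inv_def by (auto simp: case_prod_beta)

lemma word_inv_words [simp]: "word_inv w \<in> words n \<longleftrightarrow> w \<in> words n"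
  by (induction w) auto

lemma word_inv_word_inv [simp]: "word_inv (word_inv w) = w"
  by (induction w) auto

lemma eqv_cancel: "fst x \<in> alphabet n \<Longrightarrow> eqv n [x, (fst x, \<not> snd x)] []"
  by (rule eqv_of_rel) (cases x, auto simp: rels_def)

lemma eqv_cancel': "fst x \<in> alphabet n \<Longrightarrow> eqv n [(fst x, \<not> snd x), x] []"
  using eqv_cancel[of "(fst x, \<not> snd x)" n] by simp

lemma eqv_word_inv_right: "w \<in> words n \<Longrightarrow> eqv n (w @ word_inv w) []"
proof (induction w)
  case Nil then show ?case by (simp add: eqv_refl)
next
  case (Cons x w)
  have "eqv n (x # w @ word_inv w @ [(fst x, \<not> snd x)]) ([x] @ [] @ [(fst x, \<not> snd x)])"
    using Cons eqv_in_context[of n "w @ word_inv w" "[]" _ "[x]" "[(fst x, \<not> snd x)]"] by simp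
  also have "eqv n ([x] @ [] @ [(fst x, \<not> snd x)]) []"
    using eqv_cancel[of x n] Cons by simp
  finally show ?case by simp
qed

lemma eqv_word_inv_left: "w \<in> words n \<Longrightarrow> eqv n (word_inv w @ w) []"
  using eqv_word_inv_right[of "word_inv w" n] by simp

lemma group_FB: "group (FB n)"
proof (rule groupI)
  fix x assume "x \<in> carrier (FB n)"
  then obtain w where "w \<in> words n" "x = cls n w" by (auto simp: carrier_FB)
  then show "\<exists>y\<in>carrier (FB n). y \<otimes>\<^bsub>FB n\<^esub> x = \<one>\<^bsub>FB n\<^esub>"
    using eqv_word_inv_left[of w n]
    by (intro bexI[where x = "cls n (word_inv w)"]) (auto simp: carrier_FB mult_FB_cls one_FB cls_eq_iff)
qed (clarsimp simp: carrier_FB mult_FB_cls one_FB)+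

lemma inv_FB_cls: "w \<in> words n \<Longrightarrow> inv\<^bsub>FB n\<^esub> (cls n w) = cls n (word_inv w)"
  using eqv_word_inv_left[of w n]
  by (intro group.inv_equality[OF group_FB]) (auto simp: carrier_FB mult_FB_cls one_FB cls_eq_iff)

abbreviation free_word :: "word \<Rightarrow> bool" where
  "free_word w \<equiv> \<forall>x \<in> set w. is_BG (fst x)"

abbreviation braid_word :: "word \<Rightarrow> bool" where
  "braid_word w \<equiv> \<forall>x \<in> set w. is_BS (fst x)"

lemma braid_word_inv [simp]: "braid_word (word_inv s) = braid_word s"
  by (induction s) auto


section \<open>The underlying permutation and the subgroup \<open>F\<^sub>n \<rtimes> P\<^sub>n\<close>\<close>

lemma perm_word_append: "perm_word (u @ v) = perm_word u \<circ> perm_word v"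
proof (induction u)
  case (Cons x u) then show ?case by (cases x; cases "fst x") auto
qed simp

lemma perm_word_free: "free_word w \<Longrightarrow> perm_word w = id"
proof (induction w)
  case (Cons x w) then show ?case by (cases x; cases "fst x") auto
qed simp

lemma perm_word_rels: "(l, r) \<in> rels n \<Longrightarrow> perm_word l = perm_word r"
  unfolding rels_def
proof (elim UnE)
  assume "(l, r) \<in> {([(a, b), (a, \<not> b)], []) | a b. a \<in> alphabet n}"
  then obtain a b where "l = [(a, b), (a, \<not> b)]" "r = []" by blast
  then show ?thesis by (cases a) (auto simp: swp_def fun_eq_iff)
qed (auto simp: swp_def fun_eq_iff)

lemma eqv_perm_word: "eqv n u w \<Longrightarrow> perm_word u = perm_word w"
  by (induction rule: eqv.induct) (auto simp: perm_word_append perm_word_rels)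

lemma perm_word_inv: "w \<in> words n \<Longrightarrow> perm_word w = id \<Longrightarrow> perm_word (word_inv w) = id"
  using eqv_perm_word[OF eqv_word_inv_left[of w n]] by (simp add: perm_word_append)

lemma eqv_g_commute:
  "1 \<le> i \<Longrightarrow> i < n \<Longrightarrow> 1 \<le> j \<Longrightarrow> j \<le> n \<Longrightarrow> j \<noteq> i \<Longrightarrow> j \<noteq> i + 1 \<Longrightarrow>
   eqv n [P (BG j), P (BS i)] [P (BS i), P (BG j)]"
  by (rule eqv_of_rel) (unfold rels_def, blast)

lemma eqv_g_Suc_sigma: "1 \<le> i \<Longrightarrow> i < n \<Longrightarrow> eqv n [P (BG (i+1)), P (BS i)] [P (BS i), P (BG i)]"
  by (rule eqv_of_rel) (unfold rels_def, blast)

lemma eqv_g_sigma: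
  "1 \<le> i \<Longrightarrow> i < n \<Longrightarrow> eqv n [P (BG i), P (BS i)] [P (BS i), P (BG i), P (BG (i+1)), N (BG i)]"
  by (rule eqv_of_rel) (unfold rels_def, blast)

lemma eqv_push_inverse:
  assumes "eqv n [x, y] (y # f)" "fst x \<in> alphabet n" "f \<in> words n"
  shows "eqv n [(fst x, \<not> snd x), y] (y # word_inv f)"
proof -
  let ?x = "(fst x, \<not> snd x)"
  have "eqv n ([?x, y] @ []) ([?x, y] @ f @ word_inv f)"
    using eqv_word_inv_right[OF assms(3)] by (rule eqv_append[OF eqv_refl eqv_sym])
  also have "eqv n ([?x, y] @ f @ word_inv f) ([?x] @ [x, y] @ word_inv f)"
    by (rule eqv_in_context[OF eqv_sym[OF assms(1)], of _ "[?x]" "word_inv f"]) auto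
  also have "eqv n ([?x] @ [x, y] @ word_inv f) ([] @ [] @ (y # word_inv f))"
    by (rule eqv_in_context[OF eqv_cancel'[of x n], of _ "[]" "y # word_inv f"]) (use assms in auto)
  finally show ?thesis by simp
qed

lemma eqv_conj_inverse:
  assumes "eqv n (f @ [y]) [y, x]" "fst x \<in> alphabet n" "f \<in> words n"
  shows "eqv n (word_inv f @ [y]) [y, (fst x, \<not> snd x)]"
proof -
  let ?x = "(fst x, \<not> snd x)"
  have "eqv n ((word_inv f @ [y]) @ []) ((word_inv f @ [y]) @ [x, ?x])"
    by (rule eqv_in_context[OF eqv_sym[OF eqv_cancel[of x n]], of _ "word_inv f @ [y]" "[]"])
      (use assms in auto)
  also have "eqv n ((word_inv f @ [y]) @ [x, ?x]) (word_inv f @ (f @ [y]) @ [?x])"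
    by (rule eqv_in_context[OF eqv_sym[OF assms(1)], of _ "word_inv f" "[?x]"]) auto
  also have "eqv n (word_inv f @ (f @ [y]) @ [?x]) ([] @ [] @ [y, ?x])"
    by (rule eqv_in_context[OF eqv_word_inv_left[of f n], of _ "[]" "[y, ?x]"]) (use assms in auto)
  finally show ?thesis by simp
qed

lemma eqv_conj_to_push:
  assumes "eqv n (f @ [P (BS i)]) [P (BS i), x]" "1 \<le> i" "i < n"
  shows "eqv n [x, N (BS i)] (N (BS i) # f)"
proof -
  have "eqv n ([] @ [] @ [x, N (BS i)]) ([] @ [N (BS i), P (BS i)] @ [x, N (BS i)])"
    by (rule eqv_in_context[OF eqv_sym[OF eqv_cancel'[of "P (BS i)" n]], of _ "[]" "[x, N (BS i)]"])
      (use assms in \<open>auto simp: alphabet_iff\<close>)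
  also have "eqv n \<dots> ([N (BS i)] @ (f @ [P (BS i)]) @ [N (BS i)])"
    by (rule eqv_in_context[OF eqv_sym[OF assms(1)], of _ "[N (BS i)]" "[N (BS i)]"]) auto
  also have "eqv n \<dots> ((N (BS i) # f) @ [] @ [])"
    by (rule eqv_in_context[OF eqv_cancel[of "P (BS i)" n], of _ "N (BS i) # f" "[]"])
      (use assms in \<open>auto simp: alphabet_iff\<close>)
  finally show ?thesis by simp
qed

text \<open>The words \<open>push x y\<close> are read off the defining relations for \<open>y = \<sigma>\<^sub>i\<close>, and off
  the relations conjugated by \<open>\<sigma>\<^sub>i\<close> for \<open>y = \<sigma>\<^sub>i\<^sup>-\<^sup>1\<close>.\<close>

definition push_sigma :: "nat \<Rightarrow> bool \<Rightarrow> nat \<Rightarrow> word" where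
  "push_sigma j b i =
     (if j = i then (if b then [P (BG i), P (BG (i+1)), N (BG i)] else [P (BG i), N (BG (i+1)), N (BG i)])
      else if j = i + 1 then [(BG i, b)] else [(BG j, b)])"

definition push_sigma_inv :: "nat \<Rightarrow> bool \<Rightarrow> nat \<Rightarrow> word" where
  "push_sigma_inv j b i =
     (if j = i then [(BG (i+1), b)]
      else if j = i + 1 then
        (if b then [N (BG (i+1)), P (BG i), P (BG (i+1))] else [N (BG (i+1)), N (BG i), P (BG (i+1))])
      else [(BG j, b)])"

lemma eqv_push_sigma:
  assumes "1 \<le> i" "i < n" "1 \<le> j" "j \<le> n"
  shows "eqv n [(BG j, b), P (BS i)] (P (BS i) # push_sigma j b i)"
proof -
  have pos: "eqv n [P (BG j), P (BS i)] (P (BS i) # push_sigma j True i)"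
    using eqv_g_sigma[OF assms(1,2)] eqv_g_Suc_sigma[OF assms(1,2)] eqv_g_commute[OF assms]
    unfolding push_sigma_def by (cases "j = i"; cases "j = i + 1") auto
  have "eqv n [N (BG j), P (BS i)] (P (BS i) # word_inv (push_sigma j True i))"
    using eqv_push_inverse[OF pos] assms by (auto simp: alphabet_iff push_sigma_def)
  moreover have "word_inv (push_sigma j True i) = push_sigma j False i"
    by (simp add: push_sigma_def)
  ultimately show ?thesis using pos by (cases b) simp_all
qed

lemma eqv_conj_sigma_inv:
  assumes "1 \<le> i" "i < n"
  shows "eqv n ([N (BG (i+1)), P (BG i), P (BG (i+1))] @ [P (BS i)]) [P (BS i), P (BG (i+1))]"
proof -
  have inv: "eqv n [N (BG (i+1)), P (BS i)] [P (BS i), N (BG i)]"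
    using eqv_push_inverse[OF eqv_g_Suc_sigma[OF assms]] assms by (simp add: alphabet_iff)
  have "eqv n ([N (BG (i+1)), P (BG i), P (BG (i+1))] @ [P (BS i)])
      ([N (BG (i+1)), P (BG i)] @ [P (BS i), P (BG i)] @ [])"
    by (rule eqv_in_context[OF eqv_g_Suc_sigma[OF assms], of _ "[N (BG (i+1)), P (BG i)]" "[]"]) auto
  also have "eqv n \<dots> ([N (BG (i+1))] @ [P (BS i), P (BG i), P (BG (i+1)), N (BG i)] @ [P (BG i)])"
    by (rule eqv_in_context[OF eqv_g_sigma[OF assms], of _ "[N (BG (i+1))]" "[P (BG i)]"]) auto
  also have "eqv n \<dots> ([N (BG (i+1)), P (BS i), P (BG i), P (BG (i+1))] @ [] @ [])"
    by (rule eqv_in_context[OF eqv_cancel[of "N (BG i)" n], of _ "[N (BG (i+1)), P (BS i), P (BG i), P (BG (i+1))]" "[]"])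
      (use assms in \<open>auto simp: alphabet_iff\<close>)
  also have "eqv n \<dots> ([] @ [P (BS i), N (BG i)] @ [P (BG i), P (BG (i+1))])"
    by (rule eqv_in_context[OF inv, of _ "[]" "[P (BG i), P (BG (i+1))]"]) auto
  also have "eqv n \<dots> ([P (BS i)] @ [] @ [P (BG (i+1))])"
    by (rule eqv_in_context[OF eqv_cancel[of "N (BG i)" n], of _ "[P (BS i)]" "[P (BG (i+1))]"])
      (use assms in \<open>auto simp: alphabet_iff\<close>)
  finally show ?thesis by simp
qed

lemma eqv_push_sigma_inv:
  assumes "1 \<le> i" "i < n" "1 \<le> j" "j \<le> n"
  shows "eqv n [(BG j, b), N (BS i)] (N (BS i) # push_sigma_inv j b i)"
proof -
  have pos: "eqv n (push_sigma_inv j True i @ [P (BS i)]) [P (BS i), P (BG j)]"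
    using eqv_g_Suc_sigma[OF assms(1,2)] eqv_conj_sigma_inv[OF assms(1,2)] eqv_g_commute[OF assms]
    unfolding push_sigma_inv_def by (cases "j = i"; cases "j = i + 1") auto
  have "eqv n (word_inv (push_sigma_inv j True i) @ [P (BS i)]) [P (BS i), N (BG j)]"
    using eqv_conj_inverse[OF pos] assms by (auto simp: alphabet_iff push_sigma_inv_def)
  moreover have "word_inv (push_sigma_inv j True i) = push_sigma_inv j False i"
    by (simp add: push_sigma_inv_def)
  ultimately have "eqv n (push_sigma_inv j b i @ [P (BS i)]) [P (BS i), (BG j, b)]"
    using pos by (cases b) simp_all
  then show ?thesis using assms(1,2) by (rule eqv_conj_to_push)
qed

fun push :: "letter \<Rightarrow> letter \<Rightarrow> word" where
  "push (BG j, b) (BS i, c) = (if c then push_sigma j b i else push_sigma_inv j b i)"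
| "push x y = [x]"

lemma push_sound:
  assumes "fst x \<in> alphabet n" "is_BG (fst x)" "fst y \<in> alphabet n" "is_BS (fst y)"
  shows "eqv n [x, y] (y # push x y) \<and> push x y \<in> words n \<and> free_word (push x y)"
proof -
  obtain j b where x: "x = (BG j, b)" using assms(2) by (cases x; cases "fst x") auto
  obtain i c where y: "y = (BS i, c)" using assms(4) by (cases y; cases "fst y") auto
  have ij: "1 \<le> i" "i < n" "1 \<le> j" "j \<le> n" using assms unfolding x y by (auto simp: alphabet_iff)
  then show ?thesis
    using eqv_push_sigma[OF ij, of b] eqv_push_sigma_inv[OF ij, of b] unfolding x y
    by (cases c) (auto simp: push_sigma_def push_sigma_inv_def alphabet_iff)
qed

definition push_free :: "word \<Rightarrow> letter \<Rightarrow> word" where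
  "push_free f y = concat (map (\<lambda>x. push x y) f)"

lemma push_free_sound:
  assumes "free_word f" "f \<in> words n" "fst y \<in> alphabet n" "is_BS (fst y)"
  shows "eqv n (f @ [y]) (y # push_free f y) \<and> push_free f y \<in> words n \<and> free_word (push_free f y)"
  using assms(1,2)
proof (induction f)
  case Nil then show ?case by (simp add: push_free_def eqv_refl)
next
  case (Cons x f)
  then have IH: "eqv n (f @ [y]) (y # push_free f y)" "push_free f y \<in> words n"
    "free_word (push_free f y)" by auto
  have px: "eqv n [x, y] (y # push x y)" "push x y \<in> words n" "free_word (push x y)"
    using push_sound[of x n y] Cons.prems assms(3,4) by auto
  have "eqv n ((x # f) @ [y]) ([x] @ (y # push_free f y) @ [])"
    by (rule eqv_in_context[OF IH(1), of _ "[x]" "[]"]) auto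
  also have "eqv n \<dots> ([] @ (y # push x y) @ push_free f y)"
    by (rule eqv_in_context[OF px(1), of _ "[]" "push_free f y"]) auto
  finally show ?case using IH px by (simp add: push_free_def ball_Un)
qed

fun push_through :: "word \<Rightarrow> word \<Rightarrow> word" where
  "push_through f [] = f"
| "push_through f (y # s) = push_through (push_free f y) s"

lemma push_through_sound:
  "braid_word s \<Longrightarrow> s \<in> words n \<Longrightarrow> free_word f \<Longrightarrow> f \<in> words n \<Longrightarrow>
   eqv n (f @ s) (s @ push_through f s) \<and> push_through f s \<in> words n \<and> free_word (push_through f s)"
proof (induction s arbitrary: f)
  case Nil then show ?case by (simp add: eqv_refl)
next
  case (Cons y s)
  let ?f = "push_free f y"
  have p1: "eqv n (f @ [y]) (y # ?f)" "?f \<in> words n" "free_word ?f"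
    using push_free_sound[of f n y] Cons.prems by auto
  have p2: "eqv n (?f @ s) (s @ push_through ?f s)" "push_through ?f s \<in> words n"
    "free_word (push_through ?f s)"
    using Cons.IH[of ?f] Cons.prems p1(2,3) by auto
  have "eqv n (f @ y # s) ([] @ (y # ?f) @ s)"
    by (rule eqv_in_context[OF p1(1), of _ "[]" s]) auto
  also have "eqv n \<dots> ([y] @ (s @ push_through ?f s) @ [])"
    by (rule eqv_in_context[OF p2(1), of _ "[y]" "[]"]) auto
  finally show ?case using p2 by simp
qed

fun split_word :: "word \<Rightarrow> word \<times> word" where
  "split_word [] = ([], [])"
| "split_word (x # w) = (case split_word w of (s, f) \<Rightarrow>
     if is_BS (fst x) then (x # s, f) else (s, push_through [x] s @ f))"

lemma split_word_sound:
  "w \<in> words n \<Longrightarrow> eqv n w (fst (split_word w) @ snd (split_word w))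
     \<and> fst (split_word w) \<in> words n \<and> braid_word (fst (split_word w))
     \<and> snd (split_word w) \<in> words n \<and> free_word (snd (split_word w))"
proof (induction w)
  case Nil then show ?case by (simp add: eqv_refl)
next
  case (Cons x w)
  obtain s f where sf: "split_word w = (s, f)" by (cases "split_word w")
  have IH: "eqv n w (s @ f)" "s \<in> words n" "braid_word s" "f \<in> words n" "free_word f"
    using Cons sf by auto
  have x: "fst x \<in> alphabet n" using Cons.prems by simp
  have ex: "eqv n (x # w) (x # s @ f)"
    by (rule eqv_in_context[OF IH(1), of _ "[x]" "[]"]) auto
  show ?case
  proof (cases "is_BS (fst x)")
    case True then show ?thesis using ex IH x sf by simp
  next
    case False
    then have "free_word [x]" by (cases "fst x") auto
    with x have "eqv n ([x] @ s) (s @ push_through [x] s) \<and> push_through [x] s \<in> words n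
        \<and> free_word (push_through [x] s)"
      by (intro push_through_sound[OF IH(3,2)]) simp_all
    then have p: "eqv n ([x] @ s) (s @ push_through [x] s)" "push_through [x] s \<in> words n"
      "free_word (push_through [x] s)" by simp_all
    have "eqv n (x # s @ f) (s @ push_through [x] s @ f)"
      by (rule eqv_in_context[OF p(1), of _ "[]" f]) auto
    with ex have "eqv n (x # w) (s @ push_through [x] s @ f)" by (rule eqv_trans)
    then show ?thesis using IH p False sf by (simp add: ball_Un)
  qed
qed

lemma FP_eq_pure_classes: "FP n = cls n ` {w \<in> words n. perm_word w = id}"
proof
  show "FP n \<subseteq> cls n ` {w \<in> words n. perm_word w = id}"
  proof
    fix x assume "x \<in> FP n"
    then show "x \<in> cls n ` {w \<in> words n. perm_word w = id}"
      unfolding FP_def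
    proof (induction rule: generate.induct)
      case one then show ?case by (auto simp: one_FB)
    next
      case (incl h) then show ?case by (auto simp: Fn_def Pn_def perm_word_free)
    next
      case (inv h)
      then obtain w where "w \<in> words n" "perm_word w = id" "h = cls n w"
        by (auto simp: Fn_def Pn_def perm_word_free)
      then show ?case by (auto simp: inv_FB_cls perm_word_inv)
    next
      case (eng h1 h2) then show ?case by (auto simp: mult_FB_cls perm_word_append)
    qed
  qed
next
  show "cls n ` {w \<in> words n. perm_word w = id} \<subseteq> FP n"
  proof clarify
    fix u assume u: "u \<in> words n" "perm_word u = id"
    define s f where "s = fst (split_word u)" and "f = snd (split_word u)"
    have sf: "eqv n u (s @ f)" "s \<in> words n" "braid_word s" "f \<in> words n" "free_word f"
      using split_word_sound[OF u(1)] unfolding s_def f_def by auto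
    have "perm_word s = id"
      using eqv_perm_word[OF sf(1)] u(2) perm_word_free[OF sf(5)] by (simp add: perm_word_append)
    then have "cls n s \<in> Pn n" using sf by (auto simp: Pn_def)
    moreover have "cls n f \<in> Fn n" using sf by (auto simp: Fn_def)
    ultimately have "cls n s \<otimes>\<^bsub>FB n\<^esub> cls n f \<in> FP n"
      unfolding FP_def by (intro generate.eng generate.incl) blast+
    moreover have "cls n u = cls n (s @ f)" using sf(1) by (simp add: cls_eq_iff)
    ultimately show "cls n u \<in> FP n" by (simp add: mult_FB_cls)
  qed
qed


section \<open>Twisting a representation of \<open>F\<^sub>n \<rtimes> P\<^sub>n\<close>\<close>

fun twist :: "(nat \<Rightarrow> complex) \<Rightarrow> word \<Rightarrow> complex" where
  "twist t [] = 1"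
| "twist t ((BS i, b) # w) = twist (t \<circ> swp i) w"
| "twist t ((BG j, b) # w) = (if b then t j else inverse (t j)) * twist t w"

lemma twist_append: "twist t (u @ v) = twist t u * twist (t \<circ> perm_word u) v"
proof (induction u arbitrary: t)
  case (Cons x u) then show ?case by (cases x; cases "fst x") (auto simp: comp_def)
qed simp

lemma twist_braid_word: "braid_word w \<Longrightarrow> twist t w = 1"
proof (induction w arbitrary: t)
  case (Cons x w) then show ?case by (cases x; cases "fst x") auto
qed simp

lemma twist_nonzero: "\<forall>j. t j \<noteq> 0 \<Longrightarrow> twist t w \<noteq> 0"
proof (induction w arbitrary: t)
  case (Cons x w) then show ?case by (cases x; cases "fst x") auto
qed simp

lemma twist_rels:
  assumes "(l, r) \<in> rels n" "\<forall>j. t j \<noteq> 0"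
  shows "twist t l = twist t r"
  using assms(1) unfolding rels_def
proof (elim UnE)
  assume "(l, r) \<in> {([(a, b), (a, \<not> b)], []) | a b. a \<in> alphabet n}"
  then obtain a b where "l = [(a, b), (a, \<not> b)]" "r = []" by blast
  then show ?thesis using assms(2) by (cases a) auto
qed (use assms(2) in \<open>auto simp: swp_def\<close>)

lemma eqv_twist: "eqv n u w \<Longrightarrow> \<forall>j. t j \<noteq> 0 \<Longrightarrow> twist t u = twist t w"
proof (induction arbitrary: t rule: eqv.induct)
  case (eqv_rel l r u v)
  then show ?case
    using twist_rels[OF eqv_rel(1), of "t \<circ> perm_word u"] perm_word_rels[OF eqv_rel(1)]
    by (simp add: twist_append perm_word_append)
qed auto

lemma invertible_mat_iff:
  assumes A: "A \<in> carrier_mat d d"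
  shows "invertible_mat A \<longleftrightarrow> (\<exists>B \<in> carrier_mat d d. A * B = 1\<^sub>m d \<and> B * A = 1\<^sub>m d)"
proof
  assume "invertible_mat A"
  then obtain B where B: "A * B = 1\<^sub>m d" "B * A = 1\<^sub>m (dim_row B)"
    using A unfolding invertible_mat_def inverts_mat_def by auto
  have "dim_col B = d" using arg_cong[OF B(1), of dim_col] by simp
  moreover have "dim_row B = d" using arg_cong[OF B(2), of dim_col] A by simp
  ultimately show "\<exists>B \<in> carrier_mat d d. A * B = 1\<^sub>m d \<and> B * A = 1\<^sub>m d"
    using B by (intro bexI[where x = B]) auto
next
  assume "\<exists>B \<in> carrier_mat d d. A * B = 1\<^sub>m d \<and> B * A = 1\<^sub>m d"
  then show "invertible_mat A" using A unfolding invertible_mat_def inverts_mat_def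
    by (auto simp: square_mat.simps)
qed

lemma smult_smult_mat: "a \<cdot>\<^sub>m (b \<cdot>\<^sub>m A) = (a * b) \<cdot>\<^sub>m (A :: 'a :: comm_ring_1 mat)"
  by (rule eq_matI) auto

lemma one_smult_mat [simp]: "(1 :: 'a :: comm_ring_1) \<cdot>\<^sub>m A = A"
  by (rule eq_matI) auto

lemma smult_mult_smult_mat:
  assumes "A \<in> carrier_mat d d" "B \<in> carrier_mat d d"
  shows "(a \<cdot>\<^sub>m A) * (b \<cdot>\<^sub>m B) = (a * b) \<cdot>\<^sub>m (A * (B :: 'a :: comm_ring_1 mat))"
proof -
  have "(a \<cdot>\<^sub>m A) * (b \<cdot>\<^sub>m B) = a \<cdot>\<^sub>m (A * (b \<cdot>\<^sub>m B))"
    using assms by (intro mult_smult_assoc_mat) auto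
  also have "\<dots> = (a * b) \<cdot>\<^sub>m (A * B)"
    using assms by (simp add: mult_smult_distrib smult_smult_mat)
  finally show ?thesis .
qed

lemma invertible_smult_mat:
  assumes A: "A \<in> carrier_mat d d" "invertible_mat A" and c: "(c :: 'a :: field) \<noteq> 0"
  shows "invertible_mat (c \<cdot>\<^sub>m A)"
proof -
  obtain B where B: "B \<in> carrier_mat d d" "A * B = 1\<^sub>m d" "B * A = 1\<^sub>m d"
    using A invertible_mat_iff by blast
  have "(c \<cdot>\<^sub>m A) * (inverse c \<cdot>\<^sub>m B) = 1\<^sub>m d" "(inverse c \<cdot>\<^sub>m B) * (c \<cdot>\<^sub>m A) = 1\<^sub>m d"
    using A B c by (simp_all add: smult_mult_smult_mat)
  then show ?thesis using A B by (subst invertible_mat_iff[of _ d]) auto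
qed

lemma smult_character_hom_GL:
  assumes \<rho>: "\<rho> \<in> hom G (GL d)"
    and \<chi>: "\<And>x. x \<in> carrier G \<Longrightarrow> \<chi> x \<noteq> 0"
      "\<And>x y. x \<in> carrier G \<Longrightarrow> y \<in> carrier G \<Longrightarrow> \<chi> (x \<otimes>\<^bsub>G\<^esub> y) = \<chi> x * \<chi> y"
  shows "(\<lambda>x. \<chi> x \<cdot>\<^sub>m \<rho> x) \<in> hom G (GL d)"
proof (rule homI)
  fix x assume "x \<in> carrier G"
  then have "\<rho> x \<in> carrier_mat d d" "invertible_mat (\<rho> x)" "\<chi> x \<noteq> 0"
    using \<rho> \<chi>(1) unfolding hom_def GL_def by auto
  then show "\<chi> x \<cdot>\<^sub>m \<rho> x \<in> carrier (GL d)"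
    unfolding GL_def by (auto intro: invertible_smult_mat)
next
  fix x y assume xy: "x \<in> carrier G" "y \<in> carrier G"
  then have "\<rho> x \<in> carrier_mat d d" "\<rho> y \<in> carrier_mat d d" "\<rho> (x \<otimes>\<^bsub>G\<^esub> y) = \<rho> x * \<rho> y"
    using \<rho> unfolding hom_def GL_def by auto
  then show "\<chi> (x \<otimes>\<^bsub>G\<^esub> y) \<cdot>\<^sub>m \<rho> (x \<otimes>\<^bsub>G\<^esub> y) = (\<chi> x \<cdot>\<^sub>m \<rho> x) \<otimes>\<^bsub>GL d\<^esub> (\<chi> y \<cdot>\<^sub>m \<rho> y)"
    using \<chi>(2)[OF xy] by (simp add: GL_def smult_mult_smult_mat)
qed

lemma twisted_exists:
  assumes t: "\<forall>i \<in> {1..n}. t i \<noteq> 0" and \<rho>: "\<rho> \<in> hom (FPgroup n) (GL d)"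
  shows "\<exists>\<rho>t. twisted n d \<rho> t \<rho>t"
proof -
  \<comment> \<open>Only \<open>t 1, \<dots>, t n\<close> matter; making \<open>t\<close> nowhere zero makes \<open>twist\<close> respect cancellation.\<close>
  define t' where "t' j = (if t j = 0 then 1 else t j)" for j
  have t': "\<forall>j. t' j \<noteq> 0" by (simp add: t'_def)
  define \<chi> where "\<chi> X = twist t' (SOME w. w \<in> X)" for X
  have \<chi>_cls: "\<chi> (cls n w) = twist t' w" for w
    unfolding \<chi>_def using someI[of "\<lambda>u. u \<in> cls n w", OF cls_self] eqv_twist[OF _ t']
    by (simp add: cls_def)
  have pure: "X \<in> carrier (FPgroup n) \<Longrightarrow> \<exists>w. perm_word w = id \<and> X = cls n w" for X
    by (auto simp: FPgroup_def FP_eq_pure_classes)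
  have "(\<lambda>X. \<chi> X \<cdot>\<^sub>m \<rho> X) \<in> hom (FPgroup n) (GL d)"
  proof (rule smult_character_hom_GL[OF \<rho>])
    show "\<chi> X \<noteq> 0" if "X \<in> carrier (FPgroup n)" for X
      using pure[OF that] by (auto simp: \<chi>_cls twist_nonzero[OF t'])
    show "\<chi> (X \<otimes>\<^bsub>FPgroup n\<^esub> Y) = \<chi> X * \<chi> Y"
      if "X \<in> carrier (FPgroup n)" "Y \<in> carrier (FPgroup n)" for X Y
      using pure[OF that(1)] pure[OF that(2)]
      by (auto simp: FPgroup_def mult_FB_cls \<chi>_cls twist_append)
  qed
  moreover have "\<chi> (gen_g n i) \<cdot>\<^sub>m \<rho> (gen_g n i) = t i \<cdot>\<^sub>m \<rho> (gen_g n i)" if "i \<in> {1..n}" for i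
    using t that by (simp add: gen_g_def \<chi>_cls t'_def)
  moreover have "\<chi> \<beta> \<cdot>\<^sub>m \<rho> \<beta> = \<rho> \<beta>" if "\<beta> \<in> Pn n" for \<beta>
    using that by (auto simp: Pn_def \<chi>_cls twist_braid_word)
  ultimately show ?thesis unfolding twisted_def by blast
qed


section \<open>Group ring elements as formal sums of words\<close>

type_synonym fsum = "(int \<times> word) list"

definition gring_of :: "nat \<Rightarrow> fsum \<Rightarrow> gring" where
  "gring_of n L = (\<lambda>X. \<Sum>(c, w) \<leftarrow> L. if cls n w = X then c else 0)"

lemma gring_of_simps [simp]:
  "gring_of n [] X = 0"
  "gring_of n ((c, w) # L) X = (if cls n w = X then c else 0) + gring_of n L X"
  "gring_of n (A @ B) X = gring_of n A X + gring_of n B X"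
  by (simp_all add: gring_of_def)

lemma supp_gring_of: "supp (gring_of n L) \<subseteq> cls n ` snd ` set L"
proof (induction L)
  case (Cons x L) then show ?case by (cases x) (auto simp: supp_def split: if_splits)
qed (simp add: supp_def)

lemma finite_supp_gring_of: "finite (supp (gring_of n L))"
  by (rule finite_subset[OF supp_gring_of]) auto

lemma delta_cls: "delta (cls n w) = gring_of n [(1, w)]"
  by (auto simp: delta_def fun_eq_iff)

lemma sum_gring_of:
  fixes f :: "word set \<Rightarrow> 'a :: comm_ring_1"
  assumes "finite S" "cls n ` snd ` set L \<subseteq> S"
  shows "(\<Sum>x\<in>S. of_int (gring_of n L x) * f x) = (\<Sum>(c, w) \<leftarrow> L. of_int c * f (cls n w))"
  using assms(2)
proof (induction L)
  case (Cons y L)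
  obtain c w where y: "y = (c, w)" by (cases y)
  have "(\<Sum>x\<in>S. of_int (gring_of n (y # L) x) * f x)
      = (\<Sum>x\<in>S. if cls n w = x then of_int c * f x else 0) + (\<Sum>x\<in>S. of_int (gring_of n L x) * f x)"
    unfolding sum.distrib[symmetric] y by (rule sum.cong) (auto simp: distrib_right)
  also have "(\<Sum>x\<in>S. if cls n w = x then of_int c * f x else 0) = of_int c * f (cls n w)"
    using Cons.prems y assms(1) by (simp add: sum.delta)
  finally show ?case using Cons y by simp
qed simp

lemma sum_supp_gring_of:
  fixes f :: "word set \<Rightarrow> 'a :: comm_ring_1"
  shows "(\<Sum>x\<in>supp (gring_of n L). of_int (gring_of n L x) * f x)
      = (\<Sum>(c, w) \<leftarrow> L. of_int c * f (cls n w))"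
proof -
  have "(\<Sum>x\<in>supp (gring_of n L). of_int (gring_of n L x) * f x)
      = (\<Sum>x\<in>cls n ` snd ` set L. of_int (gring_of n L x) * f x)"
    by (rule sum.mono_neutral_left) (auto simp: supp_def intro: supp_gring_of[unfolded supp_def, THEN subsetD])
  also have "\<dots> = (\<Sum>(c, w) \<leftarrow> L. of_int c * f (cls n w))"
    by (rule sum_gring_of) auto
  finally show ?thesis .
qed

definition fsum_mult :: "fsum \<Rightarrow> fsum \<Rightarrow> fsum" where
  "fsum_mult A B = concat (map (\<lambda>(c, u). map (\<lambda>(d, v). (c * d, u @ v)) B) A)"

lemma fsum_mult_simps [simp]:
  "fsum_mult [] B = []"
  "fsum_mult ((c, u) # A) B = map (\<lambda>(d, v). (c * d, u @ v)) B @ fsum_mult A B"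
  "fsum_mult A [] = []"
  by (simp_all add: fsum_mult_def)

lemma gring_of_fsum_mult:
  "gring_of n (fsum_mult A B) X
     = (\<Sum>(c, u) \<leftarrow> A. c * (\<Sum>(d, v) \<leftarrow> B. d * (if cls n u \<otimes>\<^bsub>FB n\<^esub> cls n v = X then 1 else 0)))"
proof (induction A)
  case (Cons a A)
  have "gring_of n (map (\<lambda>(d, v). (c * d, u @ v)) B) X
      = c * (\<Sum>(d, v) \<leftarrow> B. d * (if cls n u \<otimes>\<^bsub>FB n\<^esub> cls n v = X then 1 else 0))" for c u
    by (induction B) (auto simp: mult_FB_cls distrib_left)
  with Cons show ?case by (cases a) simp
qed simp

lemma gr_mult_gring_of: "gr_mult n (gring_of n A) (gring_of n B) = gring_of n (fsum_mult A B)"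
proof
  fix X
  let ?a = "gring_of n A" and ?b = "gring_of n B"
  let ?e = "\<lambda>y z. if y \<otimes>\<^bsub>FB n\<^esub> z = X then 1 else (0 :: int)"
  have "gr_mult n ?a ?b X = (\<Sum>y\<in>supp ?a. of_int (?a y) * (\<Sum>z\<in>supp ?b. of_int (?b z) * ?e y z))"
    unfolding gr_mult_def by (simp add: sum_distrib_left mult_ac if_distrib cong: if_cong)
  also have "\<dots> = (\<Sum>y\<in>supp ?a. of_int (?a y) * (\<Sum>(d, v) \<leftarrow> B. of_int d * ?e y (cls n v)))"
    by (simp only: sum_supp_gring_of)
  also have "\<dots> = (\<Sum>(c, u) \<leftarrow> A. of_int c * (\<Sum>(d, v) \<leftarrow> B. of_int d * ?e (cls n u) (cls n v)))"
    by (rule sum_supp_gring_of)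
  also have "\<dots> = gring_of n (fsum_mult A B) X"
    by (simp add: gring_of_fsum_mult)
  finally show "gr_mult n ?a ?b X = gring_of n (fsum_mult A B) X" .
qed


declare upt_Suc[simp del]

type_synonym fmat = "nat \<Rightarrow> nat \<Rightarrow> fsum"

definition gmat_of :: "nat \<Rightarrow> fmat \<Rightarrow> gmat" where
  "gmat_of n A = (\<lambda>k l. gring_of n (A k l))"

definition fmat_mult :: "nat \<Rightarrow> fmat \<Rightarrow> fmat \<Rightarrow> fmat" where
  "fmat_mult n A B = (\<lambda>k l. concat (map (\<lambda>m. fsum_mult (A k m) (B m l)) [1..<Suc n]))"

definition fmat_eq :: "nat \<Rightarrow> fmat \<Rightarrow> fmat \<Rightarrow> bool" where
  "fmat_eq n A B \<longleftrightarrow> (\<forall>k\<in>{1..n}. \<forall>l\<in>{1..n}. gring_of n (A k l) = gring_of n (B k l))"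

lemma fmat_eq_refl [simp]: "fmat_eq n A A" by (simp add: fmat_eq_def)
lemma fmat_eq_sym: "fmat_eq n A B \<Longrightarrow> fmat_eq n B A" by (simp add: fmat_eq_def)
lemma fmat_eq_trans [trans]: "fmat_eq n A B \<Longrightarrow> fmat_eq n B C \<Longrightarrow> fmat_eq n A C"
  by (simp add: fmat_eq_def)

lemma gring_of_concat: "gring_of n (concat (map F xs)) X
    = sum_list (map (\<lambda>m. gring_of n (F m) X) xs)"
  by (induction xs) auto

lemma sum_list_map_upt_Suc: "(\<Sum>m \<leftarrow> [Suc 0..<Suc n]. f m) = (\<Sum>m = Suc 0..n. f m)"
  by (simp add: sum_set_upt_conv_sum_list_nat[symmetric] atLeastLessThanSuc_atLeastAtMost)

lemma gring_of_fmat_mult: "gring_of n (fmat_mult n A B k l) X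
    = (\<Sum>m\<in>{1..n}. gring_of n (fsum_mult (A k m) (B m l)) X)"
  by (simp add: fmat_mult_def gring_of_concat sum_list_map_upt_Suc)

lemma gmat_mult_gmat_of: "gmat_mult n (gmat_of n A) (gmat_of n B) = gmat_of n (fmat_mult n A B)"
  by (auto simp: fun_eq_iff gmat_mult_def gmat_of_def gring_of_fmat_mult gr_mult_gring_of)

lemma gring_of_fsum_mult_cong: "gring_of n X = gring_of n X' \<Longrightarrow> gring_of n Y = gring_of n Y'
    \<Longrightarrow> gring_of n (fsum_mult X Y) = gring_of n (fsum_mult X' Y')"
  by (metis gr_mult_gring_of)

lemma fmat_mult_cong: "fmat_eq n A A' \<Longrightarrow> fmat_eq n B B'
    \<Longrightarrow> fmat_eq n (fmat_mult n A B) (fmat_mult n A' B')"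
  unfolding fmat_eq_def
proof (intro ballI)
  fix k l assume "\<forall>k\<in>{1..n}. \<forall>l\<in>{1..n}. gring_of n (A k l) = gring_of n (A' k l)"
    "\<forall>k\<in>{1..n}. \<forall>l\<in>{1..n}. gring_of n (B k l) = gring_of n (B' k l)" "k \<in> {1..n}" "l \<in> {1..n}"
  then have "\<And>m. m \<in> {1..n} \<Longrightarrow> gring_of n (fsum_mult (A k m) (B m l))
      = gring_of n (fsum_mult (A' k m) (B' m l))"
    by (intro gring_of_fsum_mult_cong) auto
  then show "gring_of n (fmat_mult n A B k l) = gring_of n (fmat_mult n A' B' k l)"
    by (auto simp: fun_eq_iff gring_of_fmat_mult intro!: sum.cong)
qed

lemma fsum_mult_append: "fsum_mult (A @ B) C = fsum_mult A C @ fsum_mult B C"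
  by (induction A) (auto simp: fsum_mult_def)

lemma fsum_mult_concat: "fsum_mult (concat Xs) C = concat (map (\<lambda>X. fsum_mult X C) Xs)"
  by (induction Xs) (auto simp: fsum_mult_append)

lemma gring_of_fsum_mult_append_right: "gring_of n (fsum_mult A (B @ C)) X
    = gring_of n (fsum_mult A B) X + gring_of n (fsum_mult A C) X"
proof (induction A)
  case (Cons a A) then show ?case by (cases a) auto
qed simp

lemma gring_of_fsum_mult_concat_right: "gring_of n (fsum_mult A (concat (map F xs))) X
    = sum_list (map (\<lambda>m. gring_of n (fsum_mult A (F m)) X) xs)"
  by (induction xs) (auto simp: gring_of_fsum_mult_append_right)

lemma fsum_mult_map_left: "fsum_mult (map (\<lambda>(d, v). (c * d, u @ v)) B) C
    = map (\<lambda>(e, w). (c * e, u @ w)) (fsum_mult B C)"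
proof (induction B)
  case (Cons b B) then show ?case by (cases b) (auto simp: mult.assoc)
qed simp

lemma fsum_mult_assoc: "fsum_mult (fsum_mult A B) C = fsum_mult A (fsum_mult B C)"
proof (induction A)
  case (Cons a A) then show ?case by (cases a) (auto simp: fsum_mult_append fsum_mult_map_left)
qed simp

lemma fmat_mult_assoc: "fmat_eq n (fmat_mult n (fmat_mult n A B) C) (fmat_mult n A (fmat_mult n B C))"
  unfolding fmat_eq_def
proof (intro ballI)
  fix k l
  show "gring_of n (fmat_mult n (fmat_mult n A B) C k l)
      = gring_of n (fmat_mult n A (fmat_mult n B C) k l)"
  proof
    fix X
    have "gring_of n (fmat_mult n (fmat_mult n A B) C k l) X
      = (\<Sum>m\<in>{1..n}. \<Sum>p\<in>{1..n}. gring_of n (fsum_mult (fsum_mult (A k p) (B p m)) (C m l)) X)"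
      by (simp add: gring_of_fmat_mult fmat_mult_def fsum_mult_concat gring_of_concat sum_list_map_upt_Suc cong: map_cong)
    also have "\<dots>
        = (\<Sum>p\<in>{1..n}. \<Sum>m\<in>{1..n}. gring_of n (fsum_mult (A k p) (fsum_mult (B p m) (C m l))) X)"
      by (subst sum.swap) (simp add: fsum_mult_assoc)
    also have "\<dots> = gring_of n (fmat_mult n A (fmat_mult n B C) k l) X"
      by (simp only: gring_of_fmat_mult, simp add: fmat_mult_def gring_of_fsum_mult_concat_right sum_list_map_upt_Suc)
    finally show "gring_of n (fmat_mult n (fmat_mult n A B) C k l) X
        = gring_of n (fmat_mult n A (fmat_mult n B C) k l) X" .
  qed
qed

definition fmat_one :: "fmat" where "fmat_one = (\<lambda>k l. if k = l then [(1, [])] else [])"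

lemma fsum_mult_one_left [simp]: "fsum_mult [(1, [])] B = B"
proof (induction B)
  case (Cons b B) then show ?case by (cases b) auto
qed simp

lemma fmat_mult_one_left: "fmat_eq n (fmat_mult n fmat_one B) B"
  unfolding fmat_eq_def
proof (intro ballI)
  fix k l assume k: "k \<in> {1..n}"
  show "gring_of n (fmat_mult n fmat_one B k l) = gring_of n (B k l)"
  proof
    fix X
    have "\<And>m. gring_of n (fsum_mult (fmat_one k m) (B m l)) X
        = (if k = m then gring_of n (B m l) X else 0)"
      by (auto simp: fmat_one_def)
    then have "gring_of n (fmat_mult n fmat_one B k l) X
        = (\<Sum>m\<in>{1..n}. if k = m then gring_of n (B m l) X else 0)"
      by (simp add: gring_of_fmat_mult)
    also have "\<dots> = gring_of n (B k l) X" using k by (simp add: sum.delta)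
    finally show "gring_of n (fmat_mult n fmat_one B k l) X = gring_of n (B k l) X" .
  qed
qed

lemma gmat_one_eq_gmat_of: "gmat_one n = gmat_of n fmat_one"
  by (auto simp: fun_eq_iff gmat_one_def gmat_of_def fmat_one_def delta_def one_FB)


definition D_fmat :: "nat \<Rightarrow> fmat" where
  "D_fmat i = (\<lambda>k l.
     if k = i \<and> l = i then []
     else if k = i \<and> l = i + 1 then [(1, [P (BG i)])]
     else if k = i + 1 \<and> l = i then [(1, [])]
     else if k = i + 1 \<and> l = i + 1 then [(1, []), (-1, [P (BG i)])]
     else if k = l then [(1, [])] else [])"

definition Dinv_fmat :: "nat \<Rightarrow> fmat" where
  "Dinv_fmat i = (\<lambda>k l.
     if k = i \<and> l = i then [(1, []), (-1, [N (BG i)])]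
     else if k = i \<and> l = i + 1 then [(1, [])]
     else if k = i + 1 \<and> l = i then [(1, [N (BG i)])]
     else if k = i + 1 \<and> l = i + 1 then []
     else if k = l then [(1, [])] else [])"

lemma gring_of_one: "gring_of n [(1, [])] = delta (one (FB n))"
  by (auto simp: fun_eq_iff delta_def one_FB)
lemma gring_of_zero: "gring_of n [] = (\<lambda>_. 0)"
  by (auto simp: fun_eq_iff)
lemma gring_of_g: "gring_of n [(1, [P (BG i)])] = delta (gen_g n i)"
  by (auto simp: fun_eq_iff delta_def gen_g_def)
lemma gring_of_g_inv: "gring_of n [(1, [N (BG i)])] = delta (cls n [N (BG i)])"
  by (auto simp: fun_eq_iff delta_def)
lemma gring_of_one_minus_g: "gring_of n [(1, []), (-1, [P (BG i)])]
    = (\<lambda>x. delta (one (FB n)) x - delta (gen_g n i) x)"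
  by (auto simp: fun_eq_iff delta_def gen_g_def one_FB)
lemma gring_of_one_minus_g_inv: "gring_of n [(1, []), (-1, [N (BG i)])]
    = (\<lambda>x. delta (one (FB n)) x - delta (cls n [N (BG i)]) x)"
  by (auto simp: fun_eq_iff delta_def one_FB)

lemma Dmat_eq_gmat_of: "Dmat n i = gmat_of n (D_fmat i)"
  unfolding Dmat_def gmat_of_def D_fmat_def
  by (intro ext) (simp only: gring_of_one gring_of_zero gring_of_g gring_of_one_minus_g if_distrib[of "gring_of n"])

lemma Dinv_eq_gmat_of: "Dinv n i = gmat_of n (Dinv_fmat i)"
  unfolding Dinv_def gmat_of_def Dinv_fmat_def
  by (intro ext) (simp only: gring_of_one gring_of_zero gring_of_g_inv gring_of_one_minus_g_inv if_distrib[of "gring_of n"])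

fun phi_letter_fmat :: "letter \<Rightarrow> fmat" where
  "phi_letter_fmat (BS i, True) = (\<lambda>k l. fsum_mult [(1, [P (BS i)])] (D_fmat i k l))"
| "phi_letter_fmat (BS i, False) = (\<lambda>k l. fsum_mult (Dinv_fmat i k l) [(1, [N (BS i)])])"
| "phi_letter_fmat (BG j, b) = fmat_one"

lemma phi_letter_eq_gmat_of: "phi_letter n x = gmat_of n (phi_letter_fmat x)"
proof -
  obtain g b where x: "x = (g, b)" by (cases x)
  show ?thesis
  proof (cases g)
    case (BG j) then show ?thesis using x by (simp add: gmat_one_eq_gmat_of)
  next
    case (BS i) then show ?thesis using x
      by (cases b) (simp_all only: phi_letter.simps phi_letter_fmat.simps gmat_of_def Dmat_eq_gmat_of Dinv_eq_gmat_of delta_cls gr_mult_gring_of)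
  qed
qed

fun phi_word_fmat :: "nat \<Rightarrow> word \<Rightarrow> fmat" where
  "phi_word_fmat n [] = fmat_one"
| "phi_word_fmat n (x # w) = fmat_mult n (phi_letter_fmat x) (phi_word_fmat n w)"

lemma phi_word_eq_gmat_of: "phi_word n w = gmat_of n (phi_word_fmat n w)"
  by (induction w) (auto simp: gmat_one_eq_gmat_of phi_letter_eq_gmat_of gmat_mult_gmat_of)

lemma phi_word_fmat_append: "fmat_eq n (phi_word_fmat n (u @ v)) (fmat_mult n (phi_word_fmat n u) (phi_word_fmat n v))"
proof (induction u)
  case Nil then show ?case using fmat_eq_sym[OF fmat_mult_one_left] by simp
next
  case (Cons x u)
  have "fmat_eq n (phi_word_fmat n ((x # u) @ v)) (fmat_mult n (phi_letter_fmat x) (fmat_mult n (phi_word_fmat n u) (phi_word_fmat n v)))"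
    using fmat_mult_cong[OF fmat_eq_refl Cons.IH] by simp
  also have "fmat_eq n \<dots> (fmat_mult n (phi_word_fmat n (x # u)) (phi_word_fmat n v))"
    using fmat_eq_sym[OF fmat_mult_assoc] by simp
  finally show ?case .
qed


text \<open>\<open>canon_word w\<close> is equivalent to \<open>w\<close>, so two formal sums whose canonical words carry the
  same coefficients denote the same group ring element. For the explicit sums arising from the
  braid relations, these coefficients are computed by the simplifier.\<close>

fun free_reduce :: "word \<Rightarrow> word" where
  "free_reduce [] = []"
| "free_reduce (x # w) = (case free_reduce w of [] \<Rightarrow> [x]
     | y # r \<Rightarrow> if fst y = fst x \<and> snd y = (\<not> snd x) then r else x # y # r)"

lemma free_reduce_sound: "w \<in> words n \<Longrightarrow> eqv n w (free_reduce w) \<and> set (free_reduce w) \<subseteq> set w"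
proof (induction w)
  case Nil then show ?case by (simp add: eqv_refl)
next
  case (Cons x w)
  then have IH: "eqv n w (free_reduce w)" "set (free_reduce w) \<subseteq> set w" and x: "fst x \<in> alphabet n"
    by auto
  have ex: "eqv n (x # w) (x # free_reduce w)"
    by (rule eqv_in_context[OF IH(1), of _ "[x]" "[]"]) auto
  show ?case
  proof (cases "free_reduce w")
    case Nil then show ?thesis using ex IH by simp
  next
    case (Cons y r)
    show ?thesis
    proof (cases "fst y = fst x \<and> snd y = (\<not> snd x)")
      case True
      then have "y = (fst x, \<not> snd x)" by (cases y) auto
      then have "eqv n (x # free_reduce w) ([] @ [] @ r)"
        using eqv_in_context[OF eqv_cancel[OF x], of "x # free_reduce w" "[]" r] Cons by simp
      then show ?thesis using ex IH Cons True by (auto intro: eqv_trans)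
    next
      case False then show ?thesis using ex IH Cons by auto
    qed
  qed
qed

fun braid_rewrite :: "word \<Rightarrow> word" where
  "braid_rewrite [(BS a, True), (BS b, True), (BS c, True)] =
     (if a = b + 1 \<and> c = a then [P (BS b), P (BS a), P (BS b)] else [(BS a, True), (BS b, True), (BS c, True)])"
| "braid_rewrite [(BS a, True), (BS b, True)]
    = (if b + 1 < a then [P (BS b), P (BS a)] else [(BS a, True), (BS b, True)])"
| "braid_rewrite s = s"

lemma braid_rewrite_sound: "s \<in> words n \<Longrightarrow> eqv n s (braid_rewrite s)"
proof (induction s rule: braid_rewrite.induct)
  case (1 a b c)
  show ?case
  proof (cases "a = b + 1 \<and> c = a")
    case True
    have "eqv n [P (BS a), P (BS b), P (BS a)] [P (BS b), P (BS a), P (BS b)]"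
      by (rule eqv_of_rel) (use 1 True in \<open>unfold rels_def, auto simp: alphabet_iff\<close>)
    then show ?thesis using True by simp
  next
    case False then show ?thesis by (auto simp: eqv_refl)
  qed
next
  case (2 a b)
  show ?case
  proof (cases "b + 1 < a")
    case True
    have "eqv n [P (BS a), P (BS b)] [P (BS b), P (BS a)]"
      by (rule eqv_of_rel) (use 2 True in \<open>unfold rels_def, auto simp: alphabet_iff\<close>)
    then show ?thesis using True by simp
  next
    case False then show ?thesis by (simp add: eqv_refl)
  qed
qed (simp_all add: eqv_refl)

definition canon_word :: "word \<Rightarrow> word" where
  "canon_word w
      = braid_rewrite (free_reduce (fst (split_word w))) @ free_reduce (snd (split_word w))"

lemma canon_word_sound: "w \<in> words n \<Longrightarrow> eqv n w (canon_word w)"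
proof -
  assume w: "w \<in> words n"
  have s: "eqv n w (fst (split_word w) @ snd (split_word w))" "fst (split_word w) \<in> words n"
    "snd (split_word w) \<in> words n"
    using split_word_sound[OF w] by auto
  have r1: "eqv n (fst (split_word w)) (free_reduce (fst (split_word w)))"
    "set (free_reduce (fst (split_word w))) \<subseteq> set (fst (split_word w))"
    using free_reduce_sound[OF s(2)] by auto
  have r2: "eqv n (snd (split_word w)) (free_reduce (snd (split_word w)))"
    using free_reduce_sound[OF s(3)] by auto
  have "free_reduce (fst (split_word w)) \<in> words n" using r1(2) s(2) unfolding words_def by auto
  then have b: "eqv n (free_reduce (fst (split_word w))) (braid_rewrite (free_reduce (fst (split_word w))))" by (rule braid_rewrite_sound)
  have "eqv n (fst (split_word w) @ snd (split_word w)) (canon_word w)"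
    unfolding canon_word_def by (rule eqv_append[OF eqv_trans[OF r1(1) b] r2])
  then show ?thesis using s(1) by (rule eqv_trans[rotated])
qed

definition count_canon :: "fsum \<Rightarrow> word \<Rightarrow> int" where
  "count_canon L v = sum_list (map (\<lambda>(c, w). if canon_word w = v then c else 0) L)"

lemma gring_of_by_count:
  assumes "finite V" "canon_word ` snd ` set L \<subseteq> V" "\<forall>w \<in> snd ` set L. w \<in> words n"
  shows "gring_of n L X = (\<Sum>v\<in>V. if cls n v = X then count_canon L v else 0)"
  using assms(2,3)
proof (induction L)
  case Nil then show ?case by (simp add: count_canon_def cong: if_cong)
next
  case (Cons x L)
  obtain c w where x: "x = (c, w)" by (cases x)
  have w: "w \<in> words n" "canon_word w \<in> V" using Cons.prems x by auto
  have cw: "cls n w = cls n (canon_word w)" using canon_word_sound[OF w(1)] cls_eq_iff by blast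
  have IH: "gring_of n L X = (\<Sum>v\<in>V. if cls n v = X then count_canon L v else 0)" using Cons by auto
  have "(\<Sum>v\<in>V. if cls n v = X then count_canon (x # L) v else 0)
    = (\<Sum>v\<in>V. if canon_word w = v then (if cls n v = X then c else 0) else 0) + (\<Sum>v\<in>V. if cls n v = X then count_canon L v else 0)"
    unfolding sum.distrib[symmetric] by (rule sum.cong) (auto simp: count_canon_def x)
  also have "(\<Sum>v\<in>V. if canon_word w = v then (if cls n v = X then c else 0) else 0)
      = (if cls n (canon_word w) = X then c else 0)"
    using w(2) assms(1) by (simp add: sum.delta)
  finally show ?case using IH x cw by simp
qed

lemma gring_of_eqI:
  assumes "\<forall>w \<in> snd ` set (L1 @ L2). w \<in> words n" "count_canon L1 = count_canon L2"
  shows "gring_of n L1 = gring_of n L2"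
proof
  fix X
  let ?V = "canon_word ` snd ` set (L1 @ L2)"
  have "gring_of n L1 X = (\<Sum>v\<in>?V. if cls n v = X then count_canon L1 v else 0)"
    by (rule gring_of_by_count) (use assms in auto)
  also have "\<dots> = (\<Sum>v\<in>?V. if cls n v = X then count_canon L2 v else 0)" using assms(2)
    by (simp cong: if_cong)
  also have "\<dots> = gring_of n L2 X"
    by (rule gring_of_by_count[symmetric]) (use assms in auto)
  finally show "gring_of n L1 X = gring_of n L2 X" .
qed


section \<open>The matrices \<open>\<phi>\<close> respect the relations\<close>

text \<open>A braid word in \<open>\<sigma>\<^sub>i\<close> with \<open>i, i + 1 \<in> J\<close> acts on the coordinates outside \<open>J\<close> as the
  scalar given by the word itself, so the relations reduce to computations with the
  \<open>J \<times> J\<close> blocks, of size at most 4.\<close>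

definition block_fmat :: "nat set \<Rightarrow> fsum \<Rightarrow> fmat \<Rightarrow> fmat" where
  "block_fmat J c A = (\<lambda>k l. if k \<in> J \<and> l \<in> J then A k l else if k = l then c else [])"

definition fmat_mult_on :: "nat list \<Rightarrow> fmat \<Rightarrow> fmat \<Rightarrow> fmat" where
  "fmat_mult_on js A B = (\<lambda>k l. concat (map (\<lambda>m. fsum_mult (A k m) (B m l)) js))"

lemma block_fmat_outside:
  "k \<notin> J \<Longrightarrow> block_fmat J c A k m = (if k = m then c else [])"
  "l \<notin> J \<Longrightarrow> block_fmat J c A m l = (if m = l then c else [])"
  by (auto simp: block_fmat_def)

lemma block_fmat_mult:
  assumes "set js \<subseteq> {1..n}" "distinct js"
  shows "fmat_eq n (fmat_mult n (block_fmat (set js) c A) (block_fmat (set js) c' B))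
    (block_fmat (set js) (fsum_mult c c') (fmat_mult_on js A B))"
  unfolding fmat_eq_def
proof (intro ballI ext)
  fix k l X assume k: "k \<in> {1..n}" and l: "l \<in> {1..n}"
  let ?J = "set js" and ?A = "block_fmat (set js) c A" and ?B = "block_fmat (set js) c' B"
  let ?t = "\<lambda>m. gring_of n (fsum_mult (?A k m) (?B m l)) X"
  consider "k \<in> ?J" "l \<in> ?J" | "k \<notin> ?J" | "k \<in> ?J" "l \<notin> ?J" by blast
  then show "gring_of n (fmat_mult n ?A ?B k l) X
      = gring_of n (block_fmat ?J (fsum_mult c c') (fmat_mult_on js A B) k l) X"
  proof cases
    case 1
    then have "?t m = (if m \<in> ?J then gring_of n (fsum_mult (A k m) (B m l)) X else 0)" for m
      by (cases "m \<in> ?J") (auto simp: block_fmat_def)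
    then have "gring_of n (fmat_mult n ?A ?B k l) X
        = (\<Sum>m\<in>?J. gring_of n (fsum_mult (A k m) (B m l)) X)"
      using assms(1) by (simp add: gring_of_fmat_mult sum.If_cases Int_absorb1)
    also have "\<dots> = gring_of n (fmat_mult_on js A B k l) X"
      using assms(2) by (simp add: fmat_mult_on_def gring_of_concat sum_list_distinct_conv_sum_set)
    finally show ?thesis using 1 by (simp add: block_fmat_def)
  next
    case 2
    then have "?t m = (if k = m then gring_of n (fsum_mult c (?B k l)) X else 0)" for m
      by (cases "k = m") (simp_all add: block_fmat_outside(1))
    then have "gring_of n (fmat_mult n ?A ?B k l) X = gring_of n (fsum_mult c (?B k l)) X"
      using k by (simp only: gring_of_fmat_mult) simp
    then show ?thesis using 2 by (cases "k = l") (simp_all add: block_fmat_outside(1))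
  next
    case 3
    then have "k \<noteq> l" by blast
    have "?t m = (if m = l then gring_of n (fsum_mult (?A k l) c') X else 0)" for m
      using 3 by (cases "m = l") (simp_all add: block_fmat_outside(2))
    moreover have "?A k l = []" using 3 \<open>k \<noteq> l\<close> by (simp add: block_fmat_def)
    ultimately have "gring_of n (fmat_mult n ?A ?B k l) X = 0"
      by (simp only: gring_of_fmat_mult) simp
    then show ?thesis using 3 \<open>k \<noteq> l\<close> by (simp add: block_fmat_def)
  qed
qed

lemma block_fmat_eq:
  assumes "gring_of n c = gring_of n c'" "\<forall>k\<in>J. \<forall>l\<in>J. gring_of n (A k l) = gring_of n (A' k l)"
  shows "fmat_eq n (block_fmat J c A) (block_fmat J c' A')"
  using assms unfolding fmat_eq_def block_fmat_def by auto

lemma fmat_one_block: "fmat_one = block_fmat J [(1, [])] fmat_one"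
  by (auto simp: fun_eq_iff block_fmat_def fmat_one_def)

lemma phi_letter_fmat_block:
  assumes J: "{i, i + 1} \<subseteq> J"
  shows "phi_letter_fmat (BS i, b) = block_fmat J [(1, [(BS i, b)])] (phi_letter_fmat (BS i, b))"
proof (intro ext)
  fix k l
  show "phi_letter_fmat (BS i, b) k l
      = block_fmat J [(1, [(BS i, b)])] (phi_letter_fmat (BS i, b)) k l"
  proof (cases "k \<in> J \<and> l \<in> J")
    case True then show ?thesis by (simp add: block_fmat_def)
  next
    case False
    then have o: "\<not> (k \<in> {i, i + 1} \<and> l \<in> {i, i + 1})" using J by blast
    have "D_fmat i k l = (if k = l then [(1, [])] else [])"
      "Dinv_fmat i k l = (if k = l then [(1, [])] else [])"
      using o unfolding D_fmat_def Dinv_fmat_def by (cases "k = l"; auto)+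
    then show ?thesis using False
      by (cases b) (simp_all only: phi_letter_fmat.simps block_fmat_def if_False, auto)
  qed
qed

fun block_word_fmat :: "nat list \<Rightarrow> word \<Rightarrow> fmat" where
  "block_word_fmat js [] = fmat_one"
| "block_word_fmat js (x # s) = fmat_mult_on js (phi_letter_fmat x) (block_word_fmat js s)"

definition braid_word_on :: "nat set \<Rightarrow> word \<Rightarrow> bool" where
  "braid_word_on J s \<longleftrightarrow> (\<forall>x \<in> set s. \<exists>i. fst x = BS i \<and> {i, i + 1} \<subseteq> J)"

lemma phi_word_fmat_block:
  assumes "set js \<subseteq> {1..n}" "distinct js" "braid_word_on (set js) s"
  shows "fmat_eq n (phi_word_fmat n s) (block_fmat (set js) [(1, s)] (block_word_fmat js s))"
  using assms(3)
proof (induction s)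
  case Nil
  show ?case using fmat_one_block[of "set js"] by (simp add: block_fmat_def)
next
  case (Cons x s)
  obtain i b where x: "x = (BS i, b)" "{i, i + 1} \<subseteq> set js"
    using Cons.prems by (cases x) (auto simp: braid_word_on_def)
  have "fmat_eq n (phi_word_fmat n (x # s))
      (fmat_mult n (block_fmat (set js) [(1, [x])] (phi_letter_fmat x))
        (block_fmat (set js) [(1, s)] (block_word_fmat js s)))"
    using fmat_mult_cong[OF fmat_eq_refl Cons.IH] Cons.prems phi_letter_fmat_block[OF x(2), of b] x(1)
    by (simp add: braid_word_on_def)
  also have "fmat_eq n \<dots> (block_fmat (set js) [(1, x # s)] (block_word_fmat js (x # s)))"
    using block_fmat_mult[OF assms(1,2), of "[(1, [x])]" "phi_letter_fmat x" "[(1, s)]"] by simp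
  finally show ?case .
qed

lemma phi_word_fmat_eq_by_blocks:
  assumes "set js \<subseteq> {1..n}" "distinct js" "braid_word_on (set js) s" "braid_word_on (set js) s'"
    and "eqv n s s'"
    and "\<forall>k\<in>set js. \<forall>l\<in>set js.
      gring_of n (block_word_fmat js s k l) = gring_of n (block_word_fmat js s' k l)"
  shows "fmat_eq n (phi_word_fmat n s) (phi_word_fmat n s')"
proof -
  have "cls n s = cls n s'" using assms(5) by (simp add: cls_eq_iff)
  then have "gring_of n [(1, s)] = gring_of n [(1, s')]" by (simp add: fun_eq_iff)
  then have "fmat_eq n (block_fmat (set js) [(1, s)] (block_word_fmat js s))
      (block_fmat (set js) [(1, s')] (block_word_fmat js s'))"
    using assms(6) by (rule block_fmat_eq)
  then show ?thesis
    using fmat_eq_trans[OF phi_word_fmat_block[OF assms(1-3)]]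
      fmat_eq_sym[OF phi_word_fmat_block[OF assms(1,2,4)]] fmat_eq_trans by blast
qed

lemmas canon_simps = count_canon_def canon_word_def push_free_def push_sigma_def push_sigma_inv_def

lemma cancel_fmat_eq:
  assumes "1 \<le> i" "i < n"
  shows "fmat_eq n (phi_word_fmat n [(BS i, b), (BS i, \<not> b)]) (phi_word_fmat n [])"
proof (rule phi_word_fmat_eq_by_blocks[where js = "[i, i + 1]"])
  show "eqv n [(BS i, b), (BS i, \<not> b)] []"
    using eqv_cancel[of "(BS i, b)" n] assms by (simp add: alphabet_iff)
  have i: "Suc 0 \<le> i" "i < n" "i \<le> n" "Suc i \<le> n" using assms by auto
  show "\<forall>k\<in>set [i, i + 1]. \<forall>l\<in>set [i, i + 1]. gring_of n (block_word_fmat [i, i + 1] [(BS i, b), (BS i, \<not> b)] k l)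
      = gring_of n (block_word_fmat [i, i + 1] [] k l)"
    apply (cases b)
     apply (simp_all only: list.set ball_simps(5,7) simp_thms)
     apply (intro conjI; rule gring_of_eqI;
        simp add: fmat_mult_on_def D_fmat_def Dinv_fmat_def fmat_one_def alphabet_iff canon_simps fun_eq_iff i)+
    done
qed (use assms in \<open>auto simp: braid_word_on_def\<close>)

lemma commute_fmat_eq:
  assumes "1 \<le> i" "i + 1 < j" "j < n"
  shows "fmat_eq n (phi_word_fmat n [P (BS i), P (BS j)]) (phi_word_fmat n [P (BS j), P (BS i)])"
proof (rule phi_word_fmat_eq_by_blocks[where js = "[i, i + 1, j, j + 1]"])
  show "eqv n [P (BS i), P (BS j)] [P (BS j), P (BS i)]"
    by (rule eqv_of_rel) (use assms in \<open>unfold rels_def, auto\<close>)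
  have ij: "Suc 0 \<le> i" "i \<le> n" "Suc i \<le> n" "i < n" "Suc i < j" "j < n" "Suc j \<le> n" "Suc 0 \<le> j"
    "j \<le> n" "\<not> Suc j < i" "\<not> j < i" "i \<noteq> j" "j \<noteq> i" "j \<noteq> Suc i" "Suc i \<noteq> j" "Suc j \<noteq> i"
    "i \<noteq> Suc j" "Suc i \<noteq> Suc j" "Suc j \<noteq> Suc i"
    using assms by auto
  show "\<forall>k\<in>set [i, i + 1, j, j + 1]. \<forall>l\<in>set [i, i + 1, j, j + 1].
      gring_of n (block_word_fmat [i, i + 1, j, j + 1] [P (BS i), P (BS j)] k l)
      = gring_of n (block_word_fmat [i, i + 1, j, j + 1] [P (BS j), P (BS i)] k l)"
    apply (simp only: list.set ball_simps(5,7) simp_thms)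
    apply (intro conjI; rule gring_of_eqI;
        simp add: fmat_mult_on_def D_fmat_def fmat_one_def alphabet_iff canon_simps fun_eq_iff ij)+
    done
qed (use assms in \<open>auto simp: braid_word_on_def\<close>)

lemma braid_fmat_eq:
  assumes "1 \<le> i" "i + 1 < n"
  shows "fmat_eq n (phi_word_fmat n [P (BS i), P (BS (i + 1)), P (BS i)])
    (phi_word_fmat n [P (BS (i + 1)), P (BS i), P (BS (i + 1))])"
proof (rule phi_word_fmat_eq_by_blocks[where js = "[i, i + 1, i + 2]"])
  show "eqv n [P (BS i), P (BS (i + 1)), P (BS i)] [P (BS (i + 1)), P (BS i), P (BS (i + 1))]"
    by (rule eqv_of_rel) (use assms in \<open>unfold rels_def, auto\<close>)
  have i: "Suc 0 \<le> i" "i \<le> n" "Suc i \<le> n" "i < n" "Suc i < n" "Suc (Suc i) \<le> n"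
    using assms by auto
  show "\<forall>k\<in>set [i, i + 1, i + 2]. \<forall>l\<in>set [i, i + 1, i + 2].
      gring_of n (block_word_fmat [i, i + 1, i + 2] [P (BS i), P (BS (i + 1)), P (BS i)] k l)
      = gring_of n (block_word_fmat [i, i + 1, i + 2] [P (BS (i + 1)), P (BS i), P (BS (i + 1))] k l)"
    apply (simp only: list.set ball_simps(5,7) simp_thms)
    apply (intro conjI; rule gring_of_eqI;
        simp add: fmat_mult_on_def D_fmat_def fmat_one_def alphabet_iff canon_simps fun_eq_iff i)+
    done
qed (use assms in \<open>auto simp: braid_word_on_def\<close>)

lemma phi_word_fmat_filter: "fmat_eq n (phi_word_fmat n w) (phi_word_fmat n (filter (\<lambda>x. is_BS (fst x)) w))"
proof (induction w)
  case (Cons x w)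
  obtain g b where x: "x = (g, b)" by (cases x)
  show ?case
  proof (cases g)
    case (BG j)
    then show ?thesis using fmat_eq_trans[OF fmat_mult_one_left Cons.IH] x by simp
  next
    case (BS i)
    then show ?thesis using fmat_mult_cong[OF fmat_eq_refl Cons.IH] x by simp
  qed
qed simp

lemma phi_word_fmat_filter_eq:
  assumes "filter (\<lambda>x. is_BS (fst x)) l = filter (\<lambda>x. is_BS (fst x)) r"
  shows "fmat_eq n (phi_word_fmat n l) (phi_word_fmat n r)"
proof -
  have 1: "fmat_eq n (phi_word_fmat n l) (phi_word_fmat n (filter (\<lambda>x. is_BS (fst x)) r))"
    using phi_word_fmat_filter[of n l] assms by simp
  show ?thesis using fmat_eq_trans[OF 1 fmat_eq_sym[OF phi_word_fmat_filter[of n r]]] .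
qed

lemma rels_fmat_eq: "(l, r) \<in> rels n \<Longrightarrow> fmat_eq n (phi_word_fmat n l) (phi_word_fmat n r)"
  unfolding rels_def
proof (elim UnE)
  assume "(l, r) \<in> {([(a, b), (a, \<not> b)], []) | a b. a \<in> alphabet n}"
  then obtain a b where ab: "l = [(a, b), (a, \<not> b)]" "r = []" "a \<in> alphabet n" by blast
  show ?thesis
  proof (cases a)
    case (BG j) then show ?thesis using ab by (intro phi_word_fmat_filter_eq) simp
  next
    case (BS i) then show ?thesis using ab cancel_fmat_eq[of i n b] by (simp add: alphabet_iff)
  qed
next
  assume "(l, r) \<in> {([P (BS i), P (BS j)], [P (BS j), P (BS i)]) | i j.
        1 \<le> i \<and> i < n \<and> 1 \<le> j \<and> j < n \<and> (i + 1 < j \<or> j + 1 < i)}"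
  then obtain i j where ij: "l = [P (BS i), P (BS j)]" "r = [P (BS j), P (BS i)]"
    "1 \<le> i" "i < n" "1 \<le> j" "j < n" "i + 1 < j \<or> j + 1 < i" by blast
  show ?thesis
  proof (cases "i + 1 < j")
    case True then show ?thesis using ij commute_fmat_eq[of i j n] by simp
  next
    case False then show ?thesis using ij fmat_eq_sym[OF commute_fmat_eq[of j i n]] by simp
  qed
next
  assume "(l, r) \<in> {([P (BS i), P (BS j), P (BS i)], [P (BS j), P (BS i), P (BS j)]) | i j.
        1 \<le> i \<and> i < n \<and> 1 \<le> j \<and> j < n \<and> (i + 1 = j \<or> j + 1 = i)}"
  then obtain i j where ij: "l = [P (BS i), P (BS j), P (BS i)]" "r
      = [P (BS j), P (BS i), P (BS j)]"
    "1 \<le> i" "i < n" "1 \<le> j" "j < n" "i + 1 = j \<or> j + 1 = i" by blast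
  show ?thesis
  proof (cases "i + 1 = j")
    case True then show ?thesis using ij braid_fmat_eq[of i n] by auto
  next
    case False then have "j + 1 = i" using ij by auto
    then show ?thesis using ij fmat_eq_sym[OF braid_fmat_eq[of j n]] by auto
  qed
qed (auto intro: phi_word_fmat_filter_eq)

lemma eqv_phi_word_fmat: "eqv n u w \<Longrightarrow> fmat_eq n (phi_word_fmat n u) (phi_word_fmat n w)"
proof (induction rule: eqv.induct)
  case (eqv_sym u w) show ?case using eqv_sym.IH by (rule fmat_eq_sym)
next
  case (eqv_trans u v w) show ?case using eqv_trans.IH by (rule fmat_eq_trans)
next
  case (eqv_rel l r a b)
  have "fmat_eq n (phi_word_fmat n (a @ l @ b)) (fmat_mult n (phi_word_fmat n a) (fmat_mult n (phi_word_fmat n l) (phi_word_fmat n b)))"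
    using fmat_eq_trans[OF phi_word_fmat_append fmat_mult_cong[OF fmat_eq_refl phi_word_fmat_append]] .
  also have "fmat_eq n \<dots> (fmat_mult n (phi_word_fmat n a) (fmat_mult n (phi_word_fmat n r) (phi_word_fmat n b)))"
    by (intro fmat_mult_cong fmat_eq_refl rels_fmat_eq[OF eqv_rel])
  also have "fmat_eq n \<dots> (phi_word_fmat n (a @ r @ b))"
    using fmat_eq_sym[OF fmat_eq_trans[OF phi_word_fmat_append fmat_mult_cong[OF fmat_eq_refl phi_word_fmat_append]]] .
  finally show ?case .
qed simp



section \<open>The entries of \<open>\<phi>(\<beta>)\<close> for pure braids\<close>

lemma fsum_mult_mem: "(c, u) \<in> set (fsum_mult A B) \<Longrightarrow> \<exists>a u1 b u2. (a, u1) \<in> set A \<and> (b, u2) \<in> set B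
    \<and> c = a * b \<and> u = u1 @ u2"
  unfolding fsum_mult_def by auto

lemma D_fmat_mem: "(c, u) \<in> set (D_fmat i k m) \<Longrightarrow> u = [] \<or> u = [P (BG i)]"
proof -
  have "set (D_fmat i k m) \<subseteq> {(1, []), (1, [P (BG i)]), (-1, [P (BG i)])}"
    unfolding D_fmat_def by (simp split: if_split) blast
  then show "(c, u) \<in> set (D_fmat i k m) \<Longrightarrow> u = [] \<or> u = [P (BG i)]" by blast
qed

lemma Dinv_fmat_mem: "(c, u) \<in> set (Dinv_fmat i k m) \<Longrightarrow> u = [] \<or> u = [N (BG i)]"
proof -
  have "set (Dinv_fmat i k m) \<subseteq> {(1, []), (1, [N (BG i)]), (-1, [N (BG i)])}"
    unfolding Dinv_fmat_def by (simp split: if_split) blast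
  then show "(c, u) \<in> set (Dinv_fmat i k m) \<Longrightarrow> u = [] \<or> u = [N (BG i)]" by blast
qed

lemma fmat_one_mem: "(c, u) \<in> set (fmat_one k m) \<Longrightarrow> u = []"
  unfolding fmat_one_def by (auto split: if_splits)

lemma phi_letter_fmat_mem:
  assumes "fst x \<in> alphabet n" "(c, u) \<in> set (phi_letter_fmat x k m)"
  shows "u \<in> words n \<and> perm_word u = perm_word [x]"
proof -
  obtain g b where x: "x = (g, b)" by (cases x)
  show ?thesis
  proof (cases g)
    case (BG j)
    then have "u = []" using assms(2) x fmat_one_mem[of c u k m] by simp
    then show ?thesis using BG x by simp
  next
    case (BS i)
    then have i: "1 \<le> i" "i < n" using assms x by (auto simp: alphabet_iff)
    show ?thesis
    proof (cases b)
      case True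
      then obtain a u1 b' u2 where "(a, u1) \<in> set [(1, [P (BS i)])]" "(b', u2) \<in> set (D_fmat i k m)"
        "u = u1 @ u2"
        using assms(2) x BS fsum_mult_mem by fastforce
      then show ?thesis using D_fmat_mem[of b' u2 i k m] i x BS True by (auto simp: alphabet_iff)
    next
      case False
      then obtain a u1 b' u2 where "(a, u1) \<in> set (Dinv_fmat i k m)"
        "(b', u2) \<in> set [(1, [N (BS i)])]" "u = u1 @ u2"
        using assms(2) x BS fsum_mult_mem by fastforce
      then show ?thesis using Dinv_fmat_mem[of a u1 i k m] i x BS False by (auto simp: alphabet_iff)
    qed
  qed
qed

lemma fmat_mult_mem: "(c, u) \<in> set (fmat_mult n A B k l) \<Longrightarrow>
  \<exists>m a u1 b u2. (a, u1) \<in> set (A k m) \<and> (b, u2) \<in> set (B m l) \<and> u = u1 @ u2"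
  unfolding fmat_mult_def fsum_mult_def by (clarsimp; blast)

lemma phi_word_fmat_mem: "w \<in> words n \<Longrightarrow> (c, u) \<in> set (phi_word_fmat n w k l) \<Longrightarrow> u \<in> words n
    \<and> perm_word u = perm_word w"
proof (induction w arbitrary: c u k l)
  case Nil
  then have "u = []" using fmat_one_mem[of c u k l] by simp
  then show ?case by simp
next
  case (Cons x w)
  obtain m a u1 b u2 where mem: "(a, u1) \<in> set (phi_letter_fmat x k m)"
    "(b, u2) \<in> set (phi_word_fmat n w m l)" "u = u1 @ u2"
    using fmat_mult_mem[of c u n "phi_letter_fmat x" "phi_word_fmat n w" k l] Cons.prems by auto
  have 1: "u1 \<in> words n \<and> perm_word u1 = perm_word [x]"
    using phi_letter_fmat_mem[OF _ mem(1)] Cons.prems by auto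
  have 2: "u2 \<in> words n \<and> perm_word u2 = perm_word w" using Cons.IH[OF _ mem(2)] Cons.prems by auto
  have "perm_word (x # w) = perm_word [x] \<circ> perm_word w" using perm_word_append[of "[x]" w] by simp
  then show ?case using 1 2 mem(3) by (simp add: perm_word_append)
qed

lemma Pn_phi_word:
  assumes "\<beta> \<in> Pn n"
  obtains w where "w \<in> words n" "braid_word w" "perm_word w = id" "\<beta> = cls n w" "phi n \<beta>
      = gmat_of n (phi_word_fmat n w)"
proof -
  obtain w0 where w0: "w0 \<in> words n" "braid_word w0" "perm_word w0 = id" "\<beta> = cls n w0"
    using assms unfolding Pn_def by blast
  define w where "w = (SOME w. w \<in> \<beta> \<and> w \<in> words n \<and> (\<forall>x \<in> set w. is_BS (fst x)))"
  have "w \<in> \<beta> \<and> w \<in> words n \<and> (\<forall>x \<in> set w. is_BS (fst x))"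
    unfolding w_def by (rule someI[of _ w0]) (use w0 cls_self in auto)
  then have w: "w \<in> words n" "braid_word w" "eqv n w w0" using w0(4) unfolding cls_def by auto
  have "perm_word w = id" using eqv_perm_word[OF w(3)] w0(3) by simp
  moreover have "\<beta> = cls n w" using w(3) w0(4) cls_eq_iff by blast
  moreover have "phi n \<beta> = gmat_of n (phi_word_fmat n w)" unfolding phi_def w_def[symmetric]
    by (rule phi_word_eq_gmat_of)
  ultimately show ?thesis using that w by blast
qed

lemma phi_entries_in_ZFP:
  assumes "\<beta> \<in> Pn n"
  shows "in_ZFP n (phi n \<beta> k l)"
proof -
  obtain w where w: "w \<in> words n" "perm_word w = id" "phi n \<beta> = gmat_of n (phi_word_fmat n w)"
    using Pn_phi_word[OF assms] by blast
  have "supp (phi n \<beta> k l) \<subseteq> cls n ` snd ` set (phi_word_fmat n w k l)"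
    using w(3) supp_gring_of by (simp add: gmat_of_def)
  also have "\<dots> \<subseteq> FP n"
    unfolding FP_eq_pure_classes using phi_word_fmat_mem[OF w(1)] w(2) by fastforce
  finally show ?thesis
    unfolding in_ZFP_def using w(3) finite_supp_gring_of by (simp add: gmat_of_def)
qed


section \<open>Applying a representation of \<open>F\<^sub>n \<rtimes> P\<^sub>n\<close> blockwise\<close>

lemma group_FPgroup: "group (FPgroup n)"
proof -
  have "Fn n \<union> Pn n \<subseteq> carrier (FB n)"
    by (auto simp: Fn_def Pn_def carrier_FB)
  then have "subgroup (FP n) (FB n)"
    unfolding FP_def by (rule group.generate_is_subgroup[OF group_FB])
  then show ?thesis
    unfolding FPgroup_def by (rule subgroup.subgroup_is_group[OF _ group_FB])
qed

lemma hom_GL_one: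
  assumes r: "r \<in> hom G (GL d)" and G: "monoid G"
  shows "r \<one>\<^bsub>G\<^esub> = 1\<^sub>m d"
proof -
  let ?e = "r \<one>\<^bsub>G\<^esub>"
  have e: "?e \<in> carrier_mat d d" "invertible_mat ?e" "?e = ?e * ?e"
    using r monoid.one_closed[OF G] monoid.l_one[OF G, of "\<one>\<^bsub>G\<^esub>"]
    unfolding hom_def GL_def by force+
  obtain B where B: "B \<in> carrier_mat d d" "B * ?e = 1\<^sub>m d"
    using e invertible_mat_iff by blast
  have "?e = (B * ?e) * ?e" using B e by simp
  also have "\<dots> = B * (?e * ?e)" by (rule assoc_mult_mat) (use B e in auto)
  also have "\<dots> = 1\<^sub>m d" using e B by simp
  finally show ?thesis .
qed

lemma hom_FPgroup_GL:
  assumes "r \<in> hom (FPgroup n) (GL d)"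
  shows "X \<in> FP n \<Longrightarrow> r X \<in> carrier_mat d d"
    and "X \<in> FP n \<Longrightarrow> Y \<in> FP n \<Longrightarrow> r (X \<otimes>\<^bsub>FB n\<^esub> Y) = r X * r Y"
    and "r (cls n []) = 1\<^sub>m d"
  using assms hom_GL_one[OF assms group.is_monoid[OF group_FPgroup]]
  unfolding hom_def GL_def by (auto simp: FPgroup_def one_FB)

lemma index_mult_mat_sum:
  assumes "A \<in> carrier_mat k k" "B \<in> carrier_mat k k" "p < k" "q < k"
  shows "(A * B) $$ (p, q) = (\<Sum>e<k. A $$ (p, e) * B $$ (e, q))"
  using assms by (simp add: scalar_prod_def atLeast0LessThan)

definition eval_fsum ::
    "(word set \<Rightarrow> complex mat) \<Rightarrow> nat \<Rightarrow> fsum \<Rightarrow> nat \<Rightarrow> nat \<Rightarrow> complex" where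
  "eval_fsum r n L p q = (\<Sum>(c, w) \<leftarrow> L. of_int c * r (cls n w) $$ (p, q))"

lemma eval_fsum_simps [simp]:
  "eval_fsum r n [] p q = 0"
  "eval_fsum r n ((c, w) # L) p q = of_int c * r (cls n w) $$ (p, q) + eval_fsum r n L p q"
  "eval_fsum r n (A @ B) p q = eval_fsum r n A p q + eval_fsum r n B p q"
  by (simp_all add: eval_fsum_def)

lemma eval_fsum_concat: "eval_fsum r n (concat (map F xs)) p q
    = sum_list (map (\<lambda>m. eval_fsum r n (F m) p q) xs)"
  by (induction xs) auto

lemma rho_lin_gring_of:
  assumes "p < d" "q < d"
  shows "rho_lin d r (gring_of n L) $$ (p, q) = eval_fsum r n L p q"
  using assms by (simp add: rho_lin_def eval_fsum_def sum_supp_gring_of)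

definition fsum_in_FP :: "nat \<Rightarrow> fsum \<Rightarrow> bool" where
  "fsum_in_FP n L \<longleftrightarrow> (\<forall>x \<in> set L. cls n (snd x) \<in> FP n)"

lemma eval_fsum_map:
  assumes hr: "r \<in> hom (FPgroup n) (GL d)" and u: "cls n u \<in> FP n" and B: "fsum_in_FP n B"
    and pq: "p < d" "q < d"
  shows "eval_fsum r n (map (\<lambda>(b, v). (a * b, u @ v)) B) p q
      = (\<Sum>e<d. (of_int a * r (cls n u) $$ (p, e)) * eval_fsum r n B e q)"
  using B
proof (induction B)
  case Nil then show ?case by simp
next
  case (Cons y B)
  obtain b v where y: "y = (b, v)" by (cases y)
  have v: "cls n v \<in> FP n" using Cons.prems y by (auto simp: fsum_in_FP_def)
  have IH: "eval_fsum r n (map (\<lambda>(b, v). (a * b, u @ v)) B) p q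
      = (\<Sum>e<d. (of_int a * r (cls n u) $$ (p, e)) * eval_fsum r n B e q)"
    using Cons by (auto simp: fsum_in_FP_def)
  have "r (cls n (u @ v)) $$ (p, q) = (\<Sum>e<d. r (cls n u) $$ (p, e) * r (cls n v) $$ (e, q))"
    using hom_FPgroup_GL[OF hr] u v pq by (simp add: mult_FB_cls[symmetric] index_mult_mat_sum)
  then have "of_int (a * b) * r (cls n (u @ v)) $$ (p, q)
    = (\<Sum>e<d. (of_int a * r (cls n u) $$ (p, e)) * (of_int b * r (cls n v) $$ (e, q)))"
    by (simp add: sum_distrib_left mult_ac)
  then show ?case using IH y by (simp add: sum.distrib distrib_left)
qed

lemma eval_fsum_fsum_mult:
  assumes hr: "r \<in> hom (FPgroup n) (GL d)" and A: "fsum_in_FP n A" and B: "fsum_in_FP n B"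
    and pq: "p < d" "q < d"
  shows "eval_fsum r n (fsum_mult A B) p q = (\<Sum>e<d. eval_fsum r n A p e * eval_fsum r n B e q)"
  using A
proof (induction A)
  case Nil then show ?case by simp
next
  case (Cons y A)
  obtain a u where y: "y = (a, u)" by (cases y)
  have u: "cls n u \<in> FP n" using Cons.prems y by (auto simp: fsum_in_FP_def)
  have IH: "eval_fsum r n (fsum_mult A B) p q = (\<Sum>e<d. eval_fsum r n A p e * eval_fsum r n B e q)"
    using Cons by (auto simp: fsum_in_FP_def)
  show ?case using IH y eval_fsum_map[OF hr u B pq] by (simp add: sum.distrib distrib_right)
qed

definition rho_blocks :: "(word set \<Rightarrow> complex mat) \<Rightarrow> nat \<Rightarrow> nat \<Rightarrow> gmat \<Rightarrow> complex mat" where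
  "rho_blocks r n d M
      = mat (n * d) (n * d) (\<lambda>(a, b). rho_lin d r (M (a div d + 1) (b div d + 1)) $$ (a mod d, b mod d))"

lemma rho_plus_eq_rho_blocks: "rho_plus n d r \<beta> = rho_blocks r n d (phi n \<beta>)"
  by (simp add: rho_plus_def rho_blocks_def)

lemma block_index: "(a::nat) < n * d \<Longrightarrow> a div d + 1 \<in> {1..n} \<and> a mod d < d"
  by (cases "d = 0") (auto simp: less_mult_imp_div_less Suc_le_eq)

lemma rho_blocks_gmat_of: "a < n * d \<Longrightarrow> b < n * d \<Longrightarrow>
  rho_blocks r n d (gmat_of n A) $$ (a, b) = eval_fsum r n (A (a div d + 1) (b div d + 1)) (a mod d) (b mod d)"
  using block_index[of a n d] block_index[of b n d]
    by (simp add: rho_blocks_def gmat_of_def rho_lin_gring_of)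

lemma rho_blocks_fmat_eq: "fmat_eq n A B \<Longrightarrow> rho_blocks r n d (gmat_of n A)
    = rho_blocks r n d (gmat_of n B)"
  unfolding rho_blocks_def gmat_of_def fmat_eq_def by (rule eq_matI) (use block_index in auto)

lemma sum_block_reindex:
  fixes n d :: nat and g :: "nat \<Rightarrow> nat \<Rightarrow> 'a :: comm_monoid_add"
  shows "(\<Sum>c<n * d. g (c div d) (c mod d)) = (\<Sum>m<n. \<Sum>e<d. g m e)"
proof -
  have bij: "bij_betw (\<lambda>(m, e). m * d + e) ({..<n} \<times> {..<d}) {..<n * d}"
  proof (rule bij_betw_byWitness[where f'="\<lambda>c. (c div d, c mod d)"])
    show "\<forall>a\<in>{..<n} \<times> {..<d}. (\<lambda>c. (c div d, c mod d)) (case a of (m, e) \<Rightarrow> m * d + e) = a"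
      by auto
    show "\<forall>a'\<in>{..<n * d}. (case (a' div d, a' mod d) of (m, e) \<Rightarrow> m * d + e) = a'"
      by simp
    show "(\<lambda>(m, e). m * d + e) ` ({..<n} \<times> {..<d}) \<subseteq> {..<n * d}"
    proof -
      have "m * d + e < n * d" if "m < n" "e < d" for m e
      proof -
        have "m * d + e < (m + 1) * d" using that by simp
        also have "\<dots> \<le> n * d" using \<open>m < n\<close> by (intro mult_le_mono1) simp
        finally show ?thesis .
      qed
      then show ?thesis by auto
    qed
    show "(\<lambda>c. (c div d, c mod d)) ` {..<n * d} \<subseteq> {..<n} \<times> {..<d}"
      using block_index by (force simp: Suc_le_eq)
  qed
  have "(\<Sum>c<n * d. g (c div d) (c mod d)) = (\<Sum>x\<in>{..<n} \<times> {..<d}.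
      g ((case x of (m, e) \<Rightarrow> m * d + e) div d) ((case x of (m, e) \<Rightarrow> m * d + e) mod d))"
    by (rule sum.reindex_bij_betw[OF bij, symmetric])
  also have "\<dots> = (\<Sum>x\<in>{..<n} \<times> {..<d}. g (fst x) (snd x))" by (rule sum.cong) auto
  also have "\<dots> = (\<Sum>m<n. \<Sum>e<d. g m e)"
    by (simp add: sum.cartesian_product case_prod_beta)
  finally show ?thesis .
qed

lemma rho_blocks_carrier: "rho_blocks r n d M \<in> carrier_mat (n * d) (n * d)"
  by (simp add: rho_blocks_def)

lemma rho_blocks_fmat_mult:
  assumes hr: "r \<in> hom (FPgroup n) (GL d)" and A: "\<forall>k l. fsum_in_FP n (A k l)"
    and B: "\<forall>k l. fsum_in_FP n (B k l)"
  shows "rho_blocks r n d (gmat_of n (fmat_mult n A B)) = rho_blocks r n d (gmat_of n A)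
      * rho_blocks r n d (gmat_of n B)"
proof (rule eq_matI)
  fix a b assume ab: "a < dim_row (rho_blocks r n d (gmat_of n A) * rho_blocks r n d (gmat_of n B))"
    "b < dim_col (rho_blocks r n d (gmat_of n A) * rho_blocks r n d (gmat_of n B))"
  then have ab': "a < n * d" "b < n * d" by (simp_all add: rho_blocks_def)
  define k where "k = a div d + 1"
  define l where "l = b div d + 1"
  define p where "p = a mod d"
  define q where "q = b mod d"
  have pq: "p < d" "q < d" using block_index[OF ab'(1)] block_index[OF ab'(2)]
    by (auto simp: p_def q_def)
  have "(rho_blocks r n d (gmat_of n A) * rho_blocks r n d (gmat_of n B)) $$ (a, b)
    = (\<Sum>c<n * d. rho_blocks r n d (gmat_of n A) $$ (a, c) * rho_blocks r n d (gmat_of n B) $$ (c, b))"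
    by (rule index_mult_mat_sum[OF rho_blocks_carrier rho_blocks_carrier ab'])
  also have "\<dots>
      = (\<Sum>c<n * d. eval_fsum r n (A k (c div d + 1)) p (c mod d) * eval_fsum r n (B (c div d + 1) l) (c mod d) q)"
    by (rule sum.cong) (auto simp: rho_blocks_gmat_of ab' k_def l_def p_def q_def)
  also have "\<dots> = (\<Sum>m<n. \<Sum>e<d. eval_fsum r n (A k (m + 1)) p e * eval_fsum r n (B (m + 1) l) e q)"
    by (rule sum_block_reindex[where g="\<lambda>m e. eval_fsum r n (A k (m + 1)) p e * eval_fsum r n (B (m + 1) l) e q"])
  also have "\<dots> = (\<Sum>m\<in>{Suc 0..n}. \<Sum>e<d. eval_fsum r n (A k m) p e * eval_fsum r n (B m l) e q)"
    by (simp add: sum.atLeast1_atMost_eq)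
  also have "\<dots> = (\<Sum>m\<in>{Suc 0..n}. eval_fsum r n (fsum_mult (A k m) (B m l)) p q)"
    using eval_fsum_fsum_mult[OF hr _ _ pq] A B by simp
  also have "\<dots> = eval_fsum r n (fmat_mult n A B k l) p q"
    by (simp add: fmat_mult_def eval_fsum_concat sum_list_map_upt_Suc)
  also have "\<dots> = rho_blocks r n d (gmat_of n (fmat_mult n A B)) $$ (a, b)"
    by (simp add: rho_blocks_gmat_of ab' k_def l_def p_def q_def)
  finally show "rho_blocks r n d (gmat_of n (fmat_mult n A B)) $$ (a, b)
      = (rho_blocks r n d (gmat_of n A) * rho_blocks r n d (gmat_of n B)) $$ (a, b)" by simp
qed (simp_all add: rho_blocks_def)

lemma div_mod_eq_iff: "(a::nat) = b \<longleftrightarrow> a div d = b div d \<and> a mod d = b mod d"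
  by (metis div_mult_mod_eq)

lemma rho_blocks_one:
  assumes hr: "r \<in> hom (FPgroup n) (GL d)"
  shows "rho_blocks r n d (gmat_of n fmat_one) = 1\<^sub>m (n * d)"
proof (rule eq_matI)
  fix a b assume "a < dim_row (1\<^sub>m (n * d))" "b < dim_col (1\<^sub>m (n * d))"
  then have ab: "a < n * d" "b < n * d" by simp_all
  have pq: "a mod d < d" "b mod d < d" using block_index[OF ab(1)] block_index[OF ab(2)] by auto
  show "rho_blocks r n d (gmat_of n fmat_one) $$ (a, b) = 1\<^sub>m (n * d) $$ (a, b)"
    using ab pq hom_FPgroup_GL(3)[OF hr] div_mod_eq_iff[of a b d]
      by (auto simp: rho_blocks_gmat_of fmat_one_def)
qed (simp_all add: rho_blocks_def)

lemma fsum_in_FP_phi_word_fmat: "w \<in> words n \<Longrightarrow> perm_word w = id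
    \<Longrightarrow> fsum_in_FP n (phi_word_fmat n w k l)"
  unfolding fsum_in_FP_def FP_eq_pure_classes using phi_word_fmat_mem by fastforce

lemma Pn_mult:
  assumes "\<beta>1 \<in> Pn n" "\<beta>2 \<in> Pn n" shows "\<beta>1 \<otimes>\<^bsub>FB n\<^esub> \<beta>2 \<in> Pn n"
proof -
  obtain x where x: "x \<in> words n" "braid_word x" "perm_word x = id" "\<beta>1 = cls n x" using assms(1)
    unfolding Pn_def by blast
  obtain y where y: "y \<in> words n" "braid_word y" "perm_word y = id" "\<beta>2 = cls n y" using assms(2)
    unfolding Pn_def by blast
  show ?thesis unfolding Pn_def
    by (rule image_eqI[where x="x @ y"]) (use x y in \<open>auto simp: mult_FB_cls perm_word_append\<close>)
qed

lemma rho_plus_mult: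
  assumes hr: "r \<in> hom (FPgroup n) (GL d)" and b: "\<beta>1 \<in> Pn n" "\<beta>2 \<in> Pn n"
  shows "rho_plus n d r (\<beta>1 \<otimes>\<^bsub>FB n\<^esub> \<beta>2) = rho_plus n d r \<beta>1 * rho_plus n d r \<beta>2"
proof -
  obtain w1 where w1: "w1 \<in> words n" "braid_word w1" "perm_word w1 = id" "\<beta>1 = cls n w1" "phi n \<beta>1
      = gmat_of n (phi_word_fmat n w1)"
    using Pn_phi_word[OF b(1)] by blast
  obtain w2 where w2: "w2 \<in> words n" "braid_word w2" "perm_word w2 = id" "\<beta>2 = cls n w2" "phi n \<beta>2
      = gmat_of n (phi_word_fmat n w2)"
    using Pn_phi_word[OF b(2)] by blast
  obtain w where w: "w \<in> words n" "\<beta>1 \<otimes>\<^bsub>FB n\<^esub> \<beta>2 = cls n w" "phi n (\<beta>1 \<otimes>\<^bsub>FB n\<^esub> \<beta>2)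
      = gmat_of n (phi_word_fmat n w)"
    using Pn_phi_word[OF Pn_mult[OF b]] by blast
  have "cls n w = cls n (w1 @ w2)" using w(2) w1(4) w2(4) by (simp add: mult_FB_cls)
  then have "eqv n w (w1 @ w2)" using cls_eq_iff by blast
  then have le: "fmat_eq n (phi_word_fmat n w) (fmat_mult n (phi_word_fmat n w1) (phi_word_fmat n w2))"
    using fmat_eq_trans[OF eqv_phi_word_fmat phi_word_fmat_append] by blast
  have "rho_plus n d r (\<beta>1 \<otimes>\<^bsub>FB n\<^esub> \<beta>2)
      = rho_blocks r n d (gmat_of n (fmat_mult n (phi_word_fmat n w1) (phi_word_fmat n w2)))"
    using rho_blocks_fmat_eq[OF le] w(3) by (simp add: rho_plus_eq_rho_blocks)
  also have "\<dots> = rho_blocks r n d (gmat_of n (phi_word_fmat n w1))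
      * rho_blocks r n d (gmat_of n (phi_word_fmat n w2))"
    using rho_blocks_fmat_mult[OF hr] fsum_in_FP_phi_word_fmat w1 w2 by blast
  finally show ?thesis using w1 w2 by (simp add: rho_plus_eq_rho_blocks)
qed

lemma rho_plus_one:
  assumes hr: "r \<in> hom (FPgroup n) (GL d)"
  shows "rho_plus n d r (cls n []) = 1\<^sub>m (n * d)"
proof -
  have "cls n [] \<in> Pn n" unfolding Pn_def by auto
  then obtain w where w: "w \<in> words n" "cls n [] = cls n w" "phi n (cls n [])
      = gmat_of n (phi_word_fmat n w)"
    using Pn_phi_word by metis
  have "fmat_eq n (phi_word_fmat n w) (phi_word_fmat n [])" using eqv_phi_word_fmat w(2) cls_eq_iff
    by (metis eqv_sym)
  then show ?thesis using rho_blocks_fmat_eq w(3) rho_blocks_one[OF hr]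
    by (simp add: rho_plus_eq_rho_blocks)
qed

lemma rho_plus_hom:
  assumes hr: "r \<in> hom (FPgroup n) (GL d)"
  shows "rho_plus n d r \<in> hom (Pgroup n) (GL (n * d))"
proof (rule homI)
  fix \<beta> assume "\<beta> \<in> carrier (Pgroup n)"
  then have b: "\<beta> \<in> Pn n" by (simp add: Pgroup_def)
  obtain w where w: "w \<in> words n" "braid_word w" "perm_word w = id" "\<beta> = cls n w"
    using Pn_phi_word[OF b] by blast
  have pw: "perm_word (word_inv w) = id" using perm_word_inv w(1,3) .
  have b': "cls n (word_inv w) \<in> Pn n" unfolding Pn_def using w pw by auto
  have 1: "\<beta> \<otimes>\<^bsub>FB n\<^esub> cls n (word_inv w) = cls n []" using w eqv_word_inv_right[OF w(1)]
    by (simp add: mult_FB_cls cls_eq_iff)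
  have 2: "cls n (word_inv w) \<otimes>\<^bsub>FB n\<^esub> \<beta> = cls n []" using w eqv_word_inv_left[OF w(1)]
    by (simp add: mult_FB_cls cls_eq_iff)
  have "rho_plus n d r \<beta> * rho_plus n d r (cls n (word_inv w)) = 1\<^sub>m (n * d)"
    using rho_plus_mult[OF hr b b'] 1 rho_plus_one[OF hr] by simp
  moreover have "rho_plus n d r (cls n (word_inv w)) * rho_plus n d r \<beta> = 1\<^sub>m (n * d)"
    using rho_plus_mult[OF hr b' b] 2 rho_plus_one[OF hr] by simp
  moreover have c: "rho_plus n d r \<beta> \<in> carrier_mat (n * d) (n * d)"
    "rho_plus n d r (cls n (word_inv w)) \<in> carrier_mat (n * d) (n * d)"
    by (simp_all add: rho_plus_eq_rho_blocks rho_blocks_carrier)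
  ultimately have "invertible_mat (rho_plus n d r \<beta>)" using invertible_mat_iff[OF c(1)] c(2)
    by blast
  then show "rho_plus n d r \<beta> \<in> carrier (GL (n * d))" using c by (simp add: GL_def)
next
  fix x y assume "x \<in> carrier (Pgroup n)" "y \<in> carrier (Pgroup n)"
  then show "rho_plus n d r (x \<otimes>\<^bsub>Pgroup n\<^esub> y) = rho_plus n d r x \<otimes>\<^bsub>GL (n * d)\<^esub> rho_plus n d r y"
    using rho_plus_mult[OF hr] by (simp add: Pgroup_def GL_def)
qed

theorem theorem4p1:
  fixes n d :: nat and \<rho> :: "word set \<Rightarrow> complex mat" and t :: "nat \<Rightarrow> complex"
  assumes "n \<ge> 2"
    and "\<forall>i \<in> {1..n}. t i \<noteq> 0"
    and "\<rho> \<in> hom (FPgroup n) (GL d)"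
  shows "(\<exists>\<rho>t. twisted n d \<rho> t \<rho>t)
    \<and> (\<forall>\<beta> \<in> Pn n. \<forall>k \<in> {1..n}. \<forall>l \<in> {1..n}. in_ZFP n (phi n \<beta> k l))
    \<and> (\<forall>\<rho>t. twisted n d \<rho> t \<rho>t \<longrightarrow> rho_plus n d \<rho>t \<in> hom (Pgroup n) (GL (n * d)))"
  using twisted_exists[OF assms(2,3)] phi_entries_in_ZFP rho_plus_hom
  unfolding twisted_def by blast

end
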